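(* Let $\rho,\sigma,\tau,\rho_1,\rho_2,\sigma_1,\sigma_2$ be density operators on a finite-dimensional Hilbert space (with $\tau$ possibly on another finite-dimensional space in (ii)). Then: (i) $J_{\alpha,\beta}(\rho,\sigma)\ge 0$ whenever $\alpha\in(0,1),\beta\in(-\infty,0)\cup(0,1)$, or $\alpha\in(1,\infty),\beta\in[1,\infty)$; moreover for $\alpha\in(1,\infty),\beta\in[1,\infty)$, $J_{\alpha,\beta}(\rho,\sigma)\le \frac{1}{(1-\alpha)\beta}\big(2^{1-\alpha\beta}-1\big)$. (ii) For $\alpha\in(0,1)\cup(1,\infty),\beta\in(-\infty,0)\cup(0,\infty)$: $J_{\alpha,\beta}(\rho\otimes\tau,\sigma\otimes\tau)=\big[1+(1-\alpha)\beta S_{\alpha,\beta}(\tau)\big]J_{\alpha,\beta}(\rho,\sigma)$; in particular, if $\tau$ is pure then $J_{\alpha,\beta}(\rho\otimes\tau,\sigma\otimes\tau)=J_{\alpha,\beta}(\rho,\sigma)$. (iii) For $\alpha\in(0,1)\cup(1,\infty),\beta\in(-\infty,0)\cup(0,\infty)$ and any unitary $U$: $J_{\alpha,\beta}(U\rho U^\dagger,U\sigma U^\dagger)=J_{\alpha,\beta}(\rho,\sigma)$. (iv) For $\alpha\in(0,1)\cup(1,\infty),\beta\in(-\infty,0)\cup(0,\infty)$: $J_{\alpha,\beta}(\rho,\sigma)=J_{\alpha,\beta}(\sigma,\rho)$. (v) For $\alpha\in(1,\infty),\beta\in[1,\infty)$: $|J_{\alpha,\beta}(\rho_1,\sigma)-J_{\alpha,\beta}(\rho_2,\sigma)|\le\frac{\alpha}{\alpha-1}\|\rho_1-\rho_2\|_1$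 and $|J_{\alpha,\beta}(\rho,\sigma_1)-J_{\alpha,\beta}(\rho,\sigma_2)|\le\frac{\alpha}{\alpha-1}\|\sigma_1-\sigma_2\|_1$.
   Context: For a density operator $\rho$, $\alpha\in(0,1)\cup(1,\infty)$, $\beta\in(-\infty,0)\cup(0,\infty)$, the quantum $(\alpha,\beta)$ entropy is $S_{\alpha,\beta}(\rho)=\frac{1}{(1-\alpha)\beta}\big[(\mathrm{Tr}\,\rho^{\alpha})^{\beta}-1\big]$. The quantum $(\alpha,\beta)$ Jensen–Shannon divergence is $J_{\alpha,\beta}(\rho,\sigma)=S_{\alpha,\beta}\big(\tfrac{\rho+\sigma}{2}\big)-\tfrac12 S_{\alpha,\beta}(\rho)-\tfrac12 S_{\alpha,\beta}(\sigma)$. The trace distance is normalized as $\|A\|_1=\tfrac12\mathrm{Tr}|A|$. *)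

theory Defs
  imports Complex_Main "Jordan_Normal_Form.Matrix"
begin

definition mtrace :: "complex mat \<Rightarrow> complex" where
  "mtrace A = (\<Sum>i<dim_row A. A $$ (i,i))"

definition adj :: "complex mat \<Rightarrow> complex mat" where
  "adj A = transpose_mat (map_mat cnj A)"

definition unitary :: "nat \<Rightarrow> complex mat \<Rightarrow> bool" where
  "unitary n U \<longleftrightarrow> U \<in> carrier_mat n n \<and> U * adj U = 1\<^sub>m n \<and> adj U * U = 1\<^sub>m n"

definition density :: "nat \<Rightarrow> complex mat \<Rightarrow> bool" where
  "density n \<rho> \<longleftrightarrow> \<rho> \<in> carrier_mat n n \<and> adj \<rho> = \<rho> \<and>
     (\<forall>v \<in> carrier_vec n. 0 \<le> Re (scalar_prod (map_vec cnj v) (\<rho> *\<^sub>v v))) \<and>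
     mtrace \<rho> = 1"

definition pure_state :: "nat \<Rightarrow> complex mat \<Rightarrow> bool" where
  "pure_state n \<tau> \<longleftrightarrow> (\<exists>v \<in> carrier_vec n. scalar_prod (map_vec cnj v) v = 1 \<and>
     \<tau> = mat n n (\<lambda>(i,j). v $ i * cnj (v $ j)))"

definition real_diag :: "nat \<Rightarrow> (nat \<Rightarrow> real) \<Rightarrow> complex mat" where
  "real_diag n d = mat n n (\<lambda>(i,j). if i = j then complex_of_real (d i) else 0)"

definition mat_fun :: "(real \<Rightarrow> real) \<Rightarrow> complex mat \<Rightarrow> complex mat" where
  "mat_fun f A = (SOME B. \<exists>U d. unitary (dim_row A) U \<and>
      A = U * real_diag (dim_row A) d * adj U \<and>
      B = U * real_diag (dim_row A) (f \<circ> d) * adj U)"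

definition tr_pow :: "complex mat \<Rightarrow> real \<Rightarrow> real" where
  "tr_pow \<rho> \<alpha> = Re (mtrace (mat_fun (\<lambda>x. x powr \<alpha>) \<rho>))"

definition trace_norm :: "complex mat \<Rightarrow> real" where
  "trace_norm A = (1/2) * Re (mtrace (mat_fun sqrt (adj A * A)))"

definition kron :: "complex mat \<Rightarrow> complex mat \<Rightarrow> complex mat" where
  "kron A B = mat (dim_row A * dim_row B) (dim_col A * dim_col B)
     (\<lambda>(i,j). A $$ (i div dim_row B, j div dim_col B) * B $$ (i mod dim_row B, j mod dim_col B))"

definition S_ab :: "real \<Rightarrow> real \<Rightarrow> complex mat \<Rightarrow> real" where
  "S_ab \<alpha> \<beta> \<rho> = 1 / ((1 - \<alpha>) * \<beta>) * ((tr_pow \<rho> \<alpha>) powr \<beta> - 1)"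

definition J_ab :: "real \<Rightarrow> real \<Rightarrow> complex mat \<Rightarrow> complex mat \<Rightarrow> real" where
  "J_ab \<alpha> \<beta> \<rho> \<sigma> = S_ab \<alpha> \<beta> ((1/2) \<cdot>\<^sub>m (\<rho> + \<sigma>)) - S_ab \<alpha> \<beta> \<rho> / 2 - S_ab \<alpha> \<beta> \<sigma> / 2"

end

theory Submission
  imports Defs "Jordan_Normal_Form.Schur_Decomposition" "HOL-Analysis.Convex"
begin

text \<open>
  Everything is spectral: \<open>Tr \<rho>\<^sup>\<alpha>\<close> is the sum of the \<open>\<alpha>\<close>-th powers of the eigenvalues of \<open>\<rho>\<close>,
  and it is well defined because the power traces \<open>Tr \<rho>\<^sup>k\<close> determine \<open>\<Sum>\<^sub>i f(\<lambda>\<^sub>i)\<close> for every \<open>f\<close>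
  (interpolate \<open>f\<close> by a polynomial on the finitely many eigenvalues).
  The main tool is Peierls' inequality \<open>\<Sum>\<^sub>j f(H\<^sub>j\<^sub>j) \<le> \<Sum>\<^sub>k f(\<lambda>\<^sub>k)\<close> for convex \<open>f\<close>. In an
  eigenbasis of \<open>(\<rho>+\<sigma>)/2\<close> it makes \<open>\<rho> \<mapsto> Tr \<rho>\<^sup>\<alpha>\<close> midpoint convex for \<open>\<alpha> \<ge> 1\<close> and midpoint
  concave for \<open>\<alpha> \<le> 1\<close>; together with the monotonicity and convexity of \<open>x \<mapsto> x\<^sup>\<beta>\<close> this gives
  \<open>J\<^sub>\<alpha>\<^sub>,\<^sub>\<beta> \<ge> 0\<close>. Applied to a Gram matrix it gives \<open>Tr ((\<rho>+\<sigma>)/2)\<^sup>\<alpha> \<ge> 2\<^sup>-\<^sup>\<alpha> (Tr \<rho>\<^sup>\<alpha> + Tr \<sigma>\<^sup>\<alpha>)\<close>,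
  which yields the upper bound since \<open>Tr \<rho>\<^sup>\<alpha> \<le> 1\<close>. Combined with the tangent line of \<open>t\<^sup>\<alpha>\<close> it gives
  \<open>|Tr \<rho>\<^sub>1\<^sup>\<alpha> - Tr \<rho>\<^sub>2\<^sup>\<alpha>| \<le> \<alpha> \<parallel>\<rho>\<^sub>1 - \<rho>\<^sub>2\<parallel>\<^sub>1\<close>, and with the Lipschitz bound for \<open>x\<^sup>\<beta>\<close> on \<open>[0,1]\<close>
  the continuity of \<open>J\<^sub>\<alpha>\<^sub>,\<^sub>\<beta>\<close>. Finally \<open>Tr (\<rho> \<otimes> \<tau>)\<^sup>\<alpha> = Tr \<rho>\<^sup>\<alpha> Tr \<tau>\<^sup>\<alpha>\<close>, so tensoring with \<open>\<tau>\<close>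
  scales \<open>J\<^sub>\<alpha>\<^sub>,\<^sub>\<beta>\<close> by \<open>(Tr \<tau>\<^sup>\<alpha>)\<^sup>\<beta> = 1 + (1-\<alpha>)\<beta> S\<^sub>\<alpha>\<^sub>,\<^sub>\<beta>(\<tau>)\<close>, and unitary conjugation does not
  change the spectrum.
\<close>

lemma index_mult_mat_sum:
  assumes "A \<in> carrier_mat n k" "B \<in> carrier_mat k m" "i < n" "j < m"
  shows "(A * B) $$ (i,j) = (\<Sum>l<k. A $$ (i,l) * B $$ (l,j))"
  using assms by (simp add: index_mult_mat scalar_prod_def lessThan_atLeast0)

lemma assoc_mult_mat_dims:
  "dim_col A = dim_row B \<Longrightarrow> dim_col B = dim_row C \<Longrightarrow> A * B * C = A * (B * C)"
  by (rule assoc_mult_mat[of _ "dim_row A" "dim_col A" _ "dim_col B" _ "dim_col C"], auto)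

lemma cnj_mult_self: "cnj z * z = complex_of_real ((cmod z)\<^sup>2)" "z * cnj z = complex_of_real ((cmod z)\<^sup>2)"
  using complex_norm_square[of z] by (simp_all add: mult.commute)

lemma adj_carrier[simp]: "A \<in> carrier_mat n m \<Longrightarrow> adj A \<in> carrier_mat m n"
  unfolding adj_def by auto

lemma adj_dims[simp]: "dim_row (adj A) = dim_col A" "dim_col (adj A) = dim_row A"
  unfolding adj_def by auto

lemma adj_index[simp]: "i < dim_col A \<Longrightarrow> j < dim_row A \<Longrightarrow> adj A $$ (i,j) = cnj (A $$ (j,i))"
  unfolding adj_def by auto

lemma adj_adj[simp]: "adj (adj A) = A"
  by (rule eq_matI) auto

lemma adj_one[simp]: "adj (1\<^sub>m n) = 1\<^sub>m n"
  by (rule eq_matI) auto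

lemma adj_zero[simp]: "adj (0\<^sub>m n m) = 0\<^sub>m m n"
  by (rule eq_matI) auto

lemma adj_mult:
  assumes "dim_col A = dim_row B"
  shows "adj (A * B) = adj B * adj A"
proof (rule eq_matI)
  fix i j assume "i < dim_row (adj B * adj A)" "j < dim_col (adj B * adj A)"
  then have i: "i < dim_col B" and j: "j < dim_row A" by auto
  have "adj (A * B) $$ (i,j) = cnj (\<Sum>l<dim_col A. A $$ (j,l) * B $$ (l,i))"
    using assms i j by (simp add: index_mult_mat scalar_prod_def lessThan_atLeast0)
  also have "\<dots> = (\<Sum>l<dim_col A. cnj (B $$ (l,i)) * cnj (A $$ (j,l)))"
    by (simp add: mult.commute)
  also have "\<dots> = (adj B * adj A) $$ (i,j)"
    using assms i j by (simp add: index_mult_mat scalar_prod_def lessThan_atLeast0)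
  finally show "adj (A * B) $$ (i,j) = (adj B * adj A) $$ (i,j)" .
qed (use assms in auto)

lemma adj_minus:
  assumes "A \<in> carrier_mat n m" "B \<in> carrier_mat n m"
  shows "adj (A - B) = adj A - adj B"
  using assms by (intro eq_matI) auto

lemma adj_four_block_mat:
  assumes "A \<in> carrier_mat n1 m1" "B \<in> carrier_mat n1 m2" "C \<in> carrier_mat n2 m1" "D \<in> carrier_mat n2 m2"
  shows "adj (four_block_mat A B C D) = four_block_mat (adj A) (adj C) (adj B) (adj D)"
  using assms by (intro eq_matI) auto

lemma real_diag_carrier[simp]: "real_diag n d \<in> carrier_mat n n"
  unfolding real_diag_def by auto

lemma real_diag_dims[simp]: "dim_row (real_diag n d) = n" "dim_col (real_diag n d) = n"
  unfolding real_diag_def by auto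

lemma real_diag_index[simp]:
  "i < n \<Longrightarrow> j < n \<Longrightarrow> real_diag n d $$ (i,j) = (if i = j then complex_of_real (d i) else 0)"
  unfolding real_diag_def by auto

lemma adj_real_diag[simp]: "adj (real_diag n d) = real_diag n d"
  by (rule eq_matI) auto

lemma mult_real_diag_index:
  assumes "G \<in> carrier_mat m n" "l < m" "j < n"
  shows "(G * real_diag n d) $$ (l,j) = G $$ (l,j) * complex_of_real (d j)"
proof -
  have "(G * real_diag n d) $$ (l,j) = (\<Sum>k<n. G $$ (l,k) * real_diag n d $$ (k,j))"
    using assms by (intro index_mult_mat_sum) auto
  also have "\<dots> = (\<Sum>k<n. if k = j then G $$ (l,j) * complex_of_real (d j) else 0)"
    using assms by (intro sum.cong) auto
  finally show ?thesis using assms by simp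
qed

lemma real_diag_mult: "real_diag n d * real_diag n e = real_diag n (\<lambda>i. d i * e i)"
  by (rule eq_matI) (auto simp: mult_real_diag_index[of "real_diag n d" n n] simp del: index_mult_mat(1))

lemma real_diag_pow: "real_diag n d ^\<^sub>m k = real_diag n (\<lambda>i. d i ^ k)"
  by (induction k) (auto intro: eq_matI simp: real_diag_mult)

lemma real_diag_smult: "complex_of_real c \<cdot>\<^sub>m real_diag n d = real_diag n (\<lambda>i. c * d i)"
  by (rule eq_matI) auto

lemma unitaryD:
  assumes "unitary n U"
  shows "U \<in> carrier_mat n n" "adj U \<in> carrier_mat n n" "U * adj U = 1\<^sub>m n" "adj U * U = 1\<^sub>m n"
  using assms unfolding unitary_def by auto

lemma unitaryI:
  assumes "U \<in> carrier_mat n n" "adj U * U = 1\<^sub>m n"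
  shows "unitary n U"
  unfolding unitary_def using assms mat_mult_left_right_inverse[of "adj U" n U] by auto

lemma unitary_one: "unitary n (1\<^sub>m n)"
  by (rule unitaryI) auto

lemma unitary_adj: "unitary n U \<Longrightarrow> unitary n (adj U)"
  unfolding unitary_def by auto

lemma unitary_cancel:
  assumes "unitary n U" "X \<in> carrier_mat n k"
  shows "U * (adj U * X) = X" "adj U * (U * X) = X"
  using assms unitaryD[OF assms(1)] by (metis assoc_mult_mat left_mult_one_mat)+

lemma unitary_mult:
  assumes U: "unitary n U" and V: "unitary n V"
  shows "unitary n (U * V)"
proof (rule unitaryI)
  note u = unitaryD[OF U] and v = unitaryD[OF V]
  show "U * V \<in> carrier_mat n n" using u v by auto
  have "adj (U * V) * (U * V) = adj V * (adj U * (U * V))"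
    using u v by (simp add: adj_mult assoc_mult_mat_dims)
  then show "adj (U * V) * (U * V) = 1\<^sub>m n"
    using u v unitary_cancel[OF U] by auto
qed

lemma unitary_conj_conj:
  assumes "unitary n U" "unitary n V" "X \<in> carrier_mat n n"
  shows "U * (V * X * adj V) * adj U = (U * V) * X * adj (U * V)"
  using assms unitaryD[OF assms(1)] unitaryD[OF assms(2)] by (simp add: adj_mult assoc_mult_mat_dims)

lemma unitary_conj_inverse:
  assumes "unitary n U" "X \<in> carrier_mat n n"
  shows "adj U * (U * X * adj U) * U = X"
  using assms unitaryD[OF assms(1)] unitary_cancel[OF assms(1)] by (simp add: assoc_mult_mat_dims)

lemma unitary_conj_mult:
  assumes "unitary n U" "X \<in> carrier_mat n n" "Y \<in> carrier_mat n n"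
  shows "(U * X * adj U) * (U * Y * adj U) = U * (X * Y) * adj U"
  using assms unitaryD[OF assms(1)] unitary_cancel(2)[OF assms(1), of "Y * adj U" n]
  by (simp add: assoc_mult_mat_dims)

lemma unitary_conj_pow:
  assumes "unitary n U" "X \<in> carrier_mat n n"
  shows "(U * X * adj U) ^\<^sub>m k = U * (X ^\<^sub>m k) * adj U"
proof (induction k)
  case 0
  show ?case using assms unitaryD[OF assms(1)] by simp
next
  case (Suc k)
  then show ?case using assms by (simp add: unitary_conj_mult)
qed

lemma unitary_conj_smult:
  assumes "unitary n U" "X \<in> carrier_mat n n"
  shows "U * (c \<cdot>\<^sub>m X) * adj U = c \<cdot>\<^sub>m (U * X * adj U)"
  using assms unitaryD[OF assms(1)] by (metis mult_smult_assoc_mat mult_smult_distrib mult_carrier_mat)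

lemma unitary_row_norm:
  assumes U: "unitary n U" and j: "j < n"
  shows "(\<Sum>k<n. (cmod (U $$ (j,k)))\<^sup>2) = 1"
proof -
  note u = unitaryD[OF U]
  have "complex_of_real (\<Sum>k<n. (cmod (U $$ (j,k)))\<^sup>2) = (\<Sum>k<n. U $$ (j,k) * adj U $$ (k,j))"
    using u j by (simp add: cnj_mult_self)
  also have "\<dots> = (U * adj U) $$ (j,j)"
    using u j by (intro index_mult_mat_sum[symmetric]) auto
  also have "\<dots> = 1" using u j by simp
  finally show ?thesis by (metis of_real_eq_1_iff)
qed

lemma unitary_col_norm:
  assumes "unitary n U" "k < n"
  shows "(\<Sum>j<n. (cmod (U $$ (j,k)))\<^sup>2) = 1"
proof -
  have "(\<Sum>j<n. (cmod (adj U $$ (k,j)))\<^sup>2) = 1"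
    by (rule unitary_row_norm[OF unitary_adj[OF assms(1)] assms(2)])
  moreover have "(\<Sum>j<n. (cmod (adj U $$ (k,j)))\<^sup>2) = (\<Sum>j<n. (cmod (U $$ (j,k)))\<^sup>2)"
    using unitaryD[OF assms(1)] assms(2) by (intro sum.cong) auto
  ultimately show ?thesis by simp
qed

lemma unitary_mult_real_diag_col_norm:
  assumes W: "unitary n W" and k: "k < n"
  shows "(\<Sum>l<n. (cmod ((W * real_diag n d) $$ (l,k)))\<^sup>2) = (d k)\<^sup>2"
proof -
  have "(\<Sum>l<n. (cmod ((W * real_diag n d) $$ (l,k)))\<^sup>2) = (\<Sum>l<n. (cmod (W $$ (l,k)))\<^sup>2 * (d k)\<^sup>2)"
    using unitaryD(1)[OF W] k
    by (intro sum.cong) (auto simp: mult_real_diag_index norm_mult power_mult_distrib simp del: index_mult_mat)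
  then show ?thesis by (simp add: sum_distrib_right[symmetric] unitary_col_norm[OF W k])
qed

lemma unitary_block_diag:
  assumes U: "unitary n U" and V: "unitary m V"
  shows "unitary (n + m) (four_block_mat U (0\<^sub>m n m) (0\<^sub>m m n) V)"
proof (rule unitaryI)
  note u = unitaryD[OF U] and v = unitaryD[OF V]
  show "four_block_mat U (0\<^sub>m n m) (0\<^sub>m m n) V \<in> carrier_mat (n + m) (n + m)" using u v by auto
  show "adj (four_block_mat U (0\<^sub>m n m) (0\<^sub>m m n) V) * four_block_mat U (0\<^sub>m n m) (0\<^sub>m m n) V = 1\<^sub>m (n + m)"
    using u v adj_four_block_mat[OF u(1) zero_carrier_mat zero_carrier_mat v(1)]
    by (simp add: mult_four_block_mat[of _ n n _ m _ m _ _ n _ m])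
qed

lemma block_diag_decomp:
  assumes U: "unitary n U" and V: "unitary m V"
  shows "four_block_mat (U * real_diag n d * adj U) (0\<^sub>m n m) (0\<^sub>m m n) (V * real_diag m e * adj V)
    = four_block_mat U (0\<^sub>m n m) (0\<^sub>m m n) V * real_diag (n + m) (\<lambda>i. if i < n then d i else e (i - n))
      * adj (four_block_mat U (0\<^sub>m n m) (0\<^sub>m m n) V)"
proof -
  note u = unitaryD[OF U] and v = unitaryD[OF V]
  have "real_diag (n + m) (\<lambda>i. if i < n then d i else e (i - n))
      = four_block_mat (real_diag n d) (0\<^sub>m n m) (0\<^sub>m m n) (real_diag m e)"
    by (rule eq_matI) auto
  moreover have "U * real_diag n d * adj U \<in> carrier_mat n n" "V * real_diag m e * adj V \<in> carrier_mat m m"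
    using u v by auto
  ultimately show ?thesis
    using u v adj_four_block_mat[OF u(1) zero_carrier_mat zero_carrier_mat v(1)]
    by (simp add: mult_four_block_mat[of _ n n _ m _ m _ _ n _ m])
qed

subsection \<open>The spectral theorem\<close>

lemma complex_mat_eigenvector_exists:
  assumes A: "(A :: complex mat) \<in> carrier_mat n n" and n: "0 < n"
  shows "\<exists>e v. v \<in> carrier_vec n \<and> v \<noteq> 0\<^sub>v n \<and> A *\<^sub>v v = e \<cdot>\<^sub>v v"
proof -
  from char_poly_factorized[OF A] obtain as where cp: "char_poly A = (\<Prod>a\<leftarrow>as. [:- a, 1:])"
    and len: "length as = n" by auto
  from len n obtain a as' where as: "as = a # as'" by (cases as) auto
  have "eigenvalue A a"
    using eigenvalue_root_char_poly[OF A] unfolding cp as by simp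
  then obtain v where "eigenvector A v a" unfolding eigenvalue_def by auto
  then show ?thesis unfolding eigenvector_def using A by auto
qed

lemma unitary_of_orthonormal_cols:
  assumes W: "W \<in> carrier_mat n n"
    and orth: "\<And>i j. i < n \<Longrightarrow> j < n \<Longrightarrow> col W j \<bullet>c col W i = (if i = j then 1 else 0)"
  shows "unitary n W"
proof (rule unitaryI[OF W], rule eq_matI)
  fix i j assume "i < dim_row (1\<^sub>m n)" "j < dim_col (1\<^sub>m n)"
  then have i: "i < n" and j: "j < n" by auto
  have "(adj W * W) $$ (i,j) = (\<Sum>l<n. W $$ (l,j) * cnj (W $$ (l,i)))"
    using W i j by (subst index_mult_mat_sum[of _ n n _ n]) (auto simp: mult.commute)
  also have "\<dots> = col W j \<bullet>c col W i"
    using W i j by (auto simp: scalar_prod_def lessThan_atLeast0 intro!: sum.cong)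
  finally show "(adj W * W) $$ (i,j) = 1\<^sub>m n $$ (i,j)" using orth[OF i j] i j by simp
qed (use W in auto)

lemma cscalar_prod_smult:
  fixes v w :: "complex vec"
  assumes "v \<in> carrier_vec n" "w \<in> carrier_vec n"
  shows "(a \<cdot>\<^sub>v v) \<bullet>c (b \<cdot>\<^sub>v w) = a * cnj b * (v \<bullet>c w)"
  using assms by (simp add: conjugate_smult_vec scalar_prod_smult_distrib smult_scalar_prod_distrib)

lemma cscalar_prod_self_real:
  fixes w :: "complex vec"
  shows "w \<bullet>c w = complex_of_real (Re (w \<bullet>c w)) \<and> 0 \<le> Re (w \<bullet>c w)"
  using conjugate_square_ge_0_vec[of w] by (simp add: less_eq_complex_def complex_eq_iff)

lemma cscalar_prod_normalize:
  fixes w :: "complex vec"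
  assumes "w \<bullet>c w \<noteq> 0"
  obtains c where "c * cnj c * (w \<bullet>c w) = 1"
proof -
  define r where "r = Re (w \<bullet>c w)"
  have r: "w \<bullet>c w = complex_of_real r" "0 < r"
    using assms cscalar_prod_self_real[of w] unfolding r_def by (auto simp: less_eq_real_def)
  have "1 / sqrt r * (1 / sqrt r) * r = 1"
    using r(2) real_sqrt_mult_self[of r] by (simp add: field_simps)
  then have "complex_of_real (1 / sqrt r) * cnj (complex_of_real (1 / sqrt r)) * (w \<bullet>c w) = 1"
    using arg_cong[of _ _ complex_of_real] unfolding r(1)
    by (simp only: complex_cnj_complex_of_real of_real_mult[symmetric] of_real_1)
  then show ?thesis by (rule that)
qed

lemma corthogonal_basis_extension:
  fixes v :: "complex vec"
  assumes v: "v \<in> carrier_vec n" and v0: "v \<noteq> 0\<^sub>v n"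
  obtains ws where "set ws \<subseteq> carrier_vec n" "corthogonal ws" "length ws = n" "ws ! 0 = v"
proof -
  interpret cof_vec_space n "TYPE(complex)" .
  define b where "b = basis_completion v"
  from basis_completion[OF v v0, folded b_def]
  have b: "set b \<subseteq> carrier_vec n" "distinct b" "\<not> lin_dep (set b)" "length b = n" "hd b = v"
    by auto
  from v v0 have n: "0 < n" by (cases n) auto
  with b obtain vs where bv: "b = v # vs" by (cases b) auto
  define ws where "ws = gram_schmidt n b"
  from gram_schmidt_result[OF b(1-3) ws_def]
  have ws: "set ws \<subseteq> carrier_vec n" "corthogonal ws" "length ws = n" using b(4) by auto
  have "hd ws = v" unfolding ws_def bv using v by simp
  then have "ws ! 0 = v" using ws(3) n by (cases ws) auto
  with ws that show ?thesis by blast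
qed

lemma unitary_of_corthogonal:
  assumes ws: "set ws \<subseteq> carrier_vec n" "corthogonal ws" "length ws = n"
  obtains W c where "unitary n W" "\<And>i. i < n \<Longrightarrow> col W i = c i \<cdot>\<^sub>v ws ! i"
proof -
  have "\<forall>i\<in>{..<n}. \<exists>c. c * cnj c * (ws ! i \<bullet>c ws ! i) = 1"
    using corthogonalD[OF ws(2)] ws(3) cscalar_prod_normalize by (metis lessThan_iff)
  from bchoice[OF this] obtain c where c: "\<And>i. i < n \<Longrightarrow> c i * cnj (c i) * (ws ! i \<bullet>c ws ! i) = 1"
    by auto
  define W where "W = mat_of_cols n (map (\<lambda>i. c i \<cdot>\<^sub>v ws ! i) [0..<n])"
  have wsi: "i < n \<Longrightarrow> ws ! i \<in> carrier_vec n" for i using ws by auto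
  have colW: "i < n \<Longrightarrow> col W i = c i \<cdot>\<^sub>v ws ! i" for i
    unfolding W_def using wsi by simp
  have "unitary n W"
  proof (rule unitary_of_orthonormal_cols)
    show "W \<in> carrier_mat n n" unfolding W_def by auto
    fix i j assume i: "i < n" and j: "j < n"
    show "col W j \<bullet>c col W i = (if i = j then 1 else 0)"
      using corthogonalD[OF ws(2), of j i] ws(3) i j c[OF i]
      by (auto simp: colW cscalar_prod_smult[OF wsi wsi])
  qed
  with colW that show ?thesis by blast
qed

lemma unitary_with_first_col:
  assumes v: "v \<in> carrier_vec n" and v0: "v \<noteq> 0\<^sub>v n"
  obtains W c where "unitary n W" "col W 0 = c \<cdot>\<^sub>v v"
proof -
  obtain ws where ws: "set ws \<subseteq> carrier_vec n" "corthogonal ws" "length ws = n" "ws ! 0 = v"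
    using corthogonal_basis_extension[OF v v0] .
  obtain W c where "unitary n W" "\<And>i. i < n \<Longrightarrow> col W i = c i \<cdot>\<^sub>v ws ! i"
    using unitary_of_corthogonal[OF ws(1-3)] by blast
  moreover have "0 < n" using v v0 by (cases n) auto
  ultimately show ?thesis using ws(4) that by metis
qed

lemma unitary_conj_eigencol:
  assumes A: "A \<in> carrier_mat n n" and W: "unitary n W" and n: "0 < n"
    and eig: "A *\<^sub>v col W 0 = e \<cdot>\<^sub>v col W 0" and i: "i < n"
  shows "(adj W * A * W) $$ (i, 0) = (if i = 0 then e else 0)"
proof -
  note w = unitaryD[OF W]
  have WA: "adj W * A \<in> carrier_mat n n" using A w by (meson mult_carrier_mat)
  have cW: "col W 0 \<in> carrier_vec n" using w by (simp add: carrier_vecI)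
  have "col (adj W * A * W) 0 = adj W *\<^sub>v (A *\<^sub>v col W 0)"
    using A w n col_mult2[OF WA w(1) n] assoc_mult_mat_vec[of "adj W" n n A n "col W 0"] by simp
  also have "\<dots> = e \<cdot>\<^sub>v (adj W *\<^sub>v col W 0)"
    using w cW mult_mat_vec[of "adj W" n n "col W 0" e] by (simp add: eig)
  also have "adj W *\<^sub>v col W 0 = col (adj W * W) 0"
    using w n col_mult2[of "adj W" n n W n 0] by simp
  finally have col0: "col (adj W * A * W) 0 = e \<cdot>\<^sub>v col (1\<^sub>m n) 0" using w by simp
  have "(adj W * A * W) $$ (i, 0) = col (adj W * A * W) 0 $ i"
    using WA w n i by (intro index_col[symmetric]) auto
  then show ?thesis unfolding col0 using n i by simp
qed

lemma hermitian_first_col_block: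
  assumes B: "B \<in> carrier_mat (Suc k) (Suc k)" and herm: "adj B = B"
    and col0: "\<And>i. i < Suc k \<Longrightarrow> B $$ (i, 0) = (if i = 0 then e else 0)"
  shows "\<exists>c B'. B' \<in> carrier_mat k k \<and> adj B' = B' \<and>
    B = four_block_mat (real_diag 1 (\<lambda>_. c)) (0\<^sub>m 1 k) (0\<^sub>m k 1) B'"
proof -
  have entry: "B $$ (j, i) = cnj (B $$ (i, j))" if "i < Suc k" "j < Suc k" for i j
    using arg_cong[OF herm, of "\<lambda>M. M $$ (j, i)"] B that by simp
  have e_real: "e = complex_of_real (Re e)"
    using entry[of 0 0] col0[of 0] by (simp add: complex_eq_iff)
  define B' where "B' = mat k k (\<lambda>(i, j). B $$ (Suc i, Suc j))"
  have "adj B' = B'"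
  proof (rule eq_matI)
    fix i j assume "i < dim_row B'" "j < dim_col B'"
    then show "adj B' $$ (i, j) = B' $$ (i, j)"
      using entry[of "Suc i" "Suc j"] by (simp add: B'_def)
  qed (auto simp: B'_def)
  moreover have "B = four_block_mat (real_diag 1 (\<lambda>_. Re e)) (0\<^sub>m 1 k) (0\<^sub>m k 1) B'"
  proof (rule eq_matI)
    fix i j assume ij: "i < dim_row (four_block_mat (real_diag 1 (\<lambda>_. Re e)) (0\<^sub>m 1 k) (0\<^sub>m k 1) B')"
      "j < dim_col (four_block_mat (real_diag 1 (\<lambda>_. Re e)) (0\<^sub>m 1 k) (0\<^sub>m k 1) B')"
    then have i: "i < Suc k" and j: "j < Suc k" by (auto simp: B'_def)
    show "B $$ (i, j) = four_block_mat (real_diag 1 (\<lambda>_. Re e)) (0\<^sub>m 1 k) (0\<^sub>m k 1) B' $$ (i, j)"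
    proof (cases "i = 0 \<or> j = 0")
      case True
      then show ?thesis
        using i j col0 entry[of j 0] e_real by (auto simp: B'_def)
    next
      case False
      then obtain i' j' where "i = Suc i'" "j = Suc j'" by (cases i; cases j) auto
      then show ?thesis using i j by (simp add: B'_def)
    qed
  qed (use B in \<open>auto simp: B'_def\<close>)
  moreover have "B' \<in> carrier_mat k k" unfolding B'_def by simp
  ultimately show ?thesis by blast
qed

theorem hermitian_spectral_decomp:
  "A \<in> carrier_mat n n \<Longrightarrow> adj A = A \<Longrightarrow> \<exists>U d. unitary n U \<and> A = U * real_diag n d * adj U"
proof (induction n arbitrary: A)
  case 0
  then show ?case
    by (intro exI[of _ "1\<^sub>m 0"] exI[of _ "\<lambda>_. 0"] conjI unitary_one eq_matI) auto
next
  case (Suc k)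
  note A = Suc.prems(1) and herm = Suc.prems(2)
  obtain e v where v: "v \<in> carrier_vec (Suc k)" "v \<noteq> 0\<^sub>v (Suc k)" and ev: "A *\<^sub>v v = e \<cdot>\<^sub>v v"
    using complex_mat_eigenvector_exists[OF A] by auto
  obtain W c where W: "unitary (Suc k) W" and cW: "col W 0 = c \<cdot>\<^sub>v v"
    using unitary_with_first_col[OF v] .
  note w = unitaryD[OF W]
  have eig: "A *\<^sub>v col W 0 = e \<cdot>\<^sub>v col W 0"
    unfolding cW using A v ev by (simp add: mult_mat_vec smult_smult_assoc mult.commute)
  have "adj (adj W * A * W) = adj W * A * W"
    using w A herm by (simp add: adj_mult assoc_mult_mat_dims)
  moreover have "adj W * A * W \<in> carrier_mat (Suc k) (Suc k)" using w A by (meson mult_carrier_mat)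
  ultimately obtain c' B' where B': "B' \<in> carrier_mat k k" "adj B' = B'"
    and blk: "adj W * A * W = four_block_mat (real_diag 1 (\<lambda>_. c')) (0\<^sub>m 1 k) (0\<^sub>m k 1) B'"
    using hermitian_first_col_block[of "adj W * A * W" k e] unitary_conj_eigencol[OF A W _ eig]
    by blast
  obtain U' d' where U': "unitary k U'" and B'd: "B' = U' * real_diag k d' * adj U'"
    using Suc.IH[OF B'] by auto
  define V where "V = four_block_mat (1\<^sub>m 1) (0\<^sub>m 1 k) (0\<^sub>m k 1) U'"
  define d where "d = (\<lambda>i. if i < 1 then c' else d' (i - 1))"
  have V: "unitary (Suc k) V"
    using unitary_block_diag[OF unitary_one[of 1] U'] unfolding V_def by simp
  have "adj W * A * W = V * real_diag (Suc k) d * adj V"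
    using block_diag_decomp[OF unitary_one[of 1] U', of "\<lambda>_. c'" d'] unfolding blk B'd V_def d_def
    by simp
  then have "A = W * (V * real_diag (Suc k) d * adj V) * adj W"
    using unitary_conj_inverse[OF unitary_adj[OF W] A] by simp
  also have "\<dots> = (W * V) * real_diag (Suc k) d * adj (W * V)"
    by (rule unitary_conj_conj[OF W V real_diag_carrier])
  finally show ?case using unitary_mult[OF W V] by blast
qed

lemma mtrace_mult_comm:
  assumes "A \<in> carrier_mat n m" "B \<in> carrier_mat m n"
  shows "mtrace (A * B) = mtrace (B * A)"
proof -
  have "mtrace (A * B) = (\<Sum>i<n. \<Sum>l<m. A $$ (i,l) * B $$ (l,i))"
    unfolding mtrace_def using assms by (auto simp: scalar_prod_def lessThan_atLeast0 intro!: sum.cong)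
  also have "\<dots> = (\<Sum>l<m. \<Sum>i<n. B $$ (l,i) * A $$ (i,l))"
    by (subst sum.swap) (simp add: mult.commute)
  also have "\<dots> = mtrace (B * A)"
    unfolding mtrace_def using assms by (auto simp: scalar_prod_def lessThan_atLeast0 intro!: sum.cong)
  finally show ?thesis .
qed

lemma mtrace_unitary_conj:
  assumes "unitary n U" "X \<in> carrier_mat n n"
  shows "mtrace (U * X * adj U) = mtrace X"
proof -
  note u = unitaryD[OF assms(1)]
  have "mtrace (U * X * adj U) = mtrace (adj U * (U * X))"
    using u assms by (intro mtrace_mult_comm[of _ n n]) auto
  then show ?thesis using unitary_cancel[OF assms] by simp
qed

lemma mtrace_real_diag: "mtrace (real_diag n d) = complex_of_real (\<Sum>i<n. d i)"
  unfolding mtrace_def by simp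

lemma mtrace_pow_decomp:
  assumes "unitary n U"
  shows "mtrace ((U * real_diag n d * adj U) ^\<^sub>m k) = complex_of_real (\<Sum>i<n. d i ^ k)"
  using assms by (simp add: unitary_conj_pow mtrace_unitary_conj real_diag_pow mtrace_real_diag)

lemma mtrace_pow_mult_comm:
  assumes A: "A \<in> carrier_mat n m" and B: "B \<in> carrier_mat m n"
  shows "mtrace ((A * B) ^\<^sub>m Suc k) = mtrace ((B * A) ^\<^sub>m Suc k)"
proof -
  have pow: "(A * B) ^\<^sub>m Suc k = A * ((B * A) ^\<^sub>m k) * B"
  proof (induction k)
    case 0
    then show ?case using A B by simp
  next
    case (Suc k)
    have "(A * B) ^\<^sub>m Suc (Suc k) = A * ((B * A) ^\<^sub>m k) * B * (A * B)"
      using Suc by simp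
    also have "\<dots> = A * ((B * A) ^\<^sub>m k * (B * A)) * B"
      using A B by (simp add: assoc_mult_mat_dims)
    finally show ?case by simp
  qed
  have "mtrace (A * ((B * A) ^\<^sub>m k) * B) = mtrace (A * ((B * A) ^\<^sub>m k * B))"
    using A B by (simp add: assoc_mult_mat_dims)
  also have "\<dots> = mtrace ((B * A) ^\<^sub>m k * B * A)"
    using A B by (intro mtrace_mult_comm[of _ n m]) auto
  also have "(B * A) ^\<^sub>m k * B * A = (B * A) ^\<^sub>m Suc k"
    using A B by (simp add: assoc_mult_mat_dims)
  finally show ?thesis unfolding pow .
qed

lemma poly_interpolation_exists:
  fixes g :: "real \<Rightarrow> real"
  assumes "finite S"
  shows "\<exists>p. \<forall>x\<in>S. poly p x = g x"
  using assms
proof (induction S rule: finite_induct)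
  case empty
  then show ?case by auto
next
  case (insert a S)
  then obtain p where p: "\<forall>x\<in>S. poly p x = g x" by auto
  define q where "q = (\<Prod>s\<in>S. [:- s, 1:])"
  have q0: "\<And>x. x \<in> S \<Longrightarrow> poly q x = 0"
    unfolding q_def poly_prod using insert(1) by (intro prod_zero) auto
  have qa: "poly q a \<noteq> 0"
    unfolding q_def poly_prod using insert(1,2) by auto
  show ?case
    by (rule exI[of _ "p + smult ((g a - poly p a) / poly q a) q"]) (use p q0 qa in auto)
qed

lemma sum_fun_eq_if_power_sums_eq:
  fixes d e :: "nat \<Rightarrow> real" and g :: "real \<Rightarrow> real"
  assumes "\<And>k. (\<Sum>i<n. d i ^ k) = (\<Sum>i<m. e i ^ k)"
  shows "(\<Sum>i<n. g (d i)) = (\<Sum>i<m. g (e i))"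
proof -
  obtain p where p: "\<forall>x\<in>d ` {..<n} \<union> e ` {..<m}. poly p x = g x"
    using poly_interpolation_exists[of "d ` {..<n} \<union> e ` {..<m}" g] by auto
  have "(\<Sum>i<n. g (d i)) = (\<Sum>i<n. \<Sum>j\<le>degree p. coeff p j * d i ^ j)"
    using p by (simp add: poly_altdef)
  also have "\<dots> = (\<Sum>j\<le>degree p. coeff p j * (\<Sum>i<n. d i ^ j))"
    by (subst sum.swap) (simp add: sum_distrib_left)
  also have "\<dots> = (\<Sum>j\<le>degree p. coeff p j * (\<Sum>i<m. e i ^ j))"
    using assms by simp
  also have "\<dots> = (\<Sum>i<m. \<Sum>j\<le>degree p. coeff p j * e i ^ j)"
    by (subst sum.swap) (simp add: sum_distrib_left)
  also have "\<dots> = (\<Sum>i<m. g (e i))"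
    using p by (simp add: poly_altdef)
  finally show ?thesis .
qed

text \<open>\<^const>\<open>mat_fun\<close> picks its eigendecomposition by Hilbert choice; the trace is nevertheless
  determined, because the power sums of the eigenvalues are the traces of the powers of \<open>A\<close>.\<close>

lemma mtrace_mat_fun:
  assumes U: "unitary n U" and A: "A = U * real_diag n d * adj U"
  shows "mtrace (mat_fun f A) = complex_of_real (\<Sum>i<n. f (d i))"
proof -
  have dimA: "dim_row A = n" using unitaryD[OF U] A by simp
  let ?P = "\<lambda>B. \<exists>U d. unitary (dim_row A) U \<and> A = U * real_diag (dim_row A) d * adj U \<and>
      B = U * real_diag (dim_row A) (f \<circ> d) * adj U"
  have "?P (U * real_diag n (f \<circ> d) * adj U)" using U A dimA by auto
  then have "?P (mat_fun f A)" unfolding mat_fun_def by (rule someI)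
  then obtain V e where V: "unitary n V" and Ae: "A = V * real_diag n e * adj V"
    and B: "mat_fun f A = V * real_diag n (f \<circ> e) * adj V" unfolding dimA by auto
  have sums: "(\<Sum>i<n. f (e i)) = (\<Sum>i<n. f (d i))"
  proof (rule sum_fun_eq_if_power_sums_eq[where d = e and e = d and g = f])
    fix k
    have "complex_of_real (\<Sum>i<n. e i ^ k) = complex_of_real (\<Sum>i<n. d i ^ k)"
      using mtrace_pow_decomp[OF V, of e k] mtrace_pow_decomp[OF U, of d k] Ae A by simp
    then show "(\<Sum>i<n. e i ^ k) = (\<Sum>i<n. d i ^ k)" by (simp only: of_real_eq_iff)
  qed
  show ?thesis
    unfolding B mtrace_unitary_conj[OF V real_diag_carrier] mtrace_real_diag
    by (simp only: comp_def sums)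
qed

lemma trace_norm_decomp:
  assumes U: "unitary n U" and A: "A = U * real_diag n d * adj U"
  shows "trace_norm A = (\<Sum>i<n. \<bar>d i\<bar>) / 2"
proof -
  have "adj A = A"
    unfolding A using unitaryD[OF U] by (simp add: adj_mult assoc_mult_mat_dims)
  then have "adj A * A = U * real_diag n (\<lambda>i. d i * d i) * adj U"
    unfolding A by (simp add: unitary_conj_mult[OF U] real_diag_mult)
  from mtrace_mat_fun[OF U this, of sqrt] show ?thesis
    unfolding trace_norm_def by (simp add: real_sqrt_mult_self)
qed

definition tr_fun :: "(real \<Rightarrow> real) \<Rightarrow> complex mat \<Rightarrow> real" where
  "tr_fun f A = Re (mtrace (mat_fun f A))"

lemma tr_pow_eq_tr_fun: "tr_pow \<rho> a = tr_fun (\<lambda>x. x powr a) \<rho>"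
  unfolding tr_pow_def tr_fun_def ..

lemma tr_fun_decomp:
  assumes "unitary n U" "A = U * real_diag n d * adj U"
  shows "tr_fun f A = (\<Sum>i<n. f (d i))"
  unfolding tr_fun_def mtrace_mat_fun[OF assms] by simp

lemma tr_fun_cmult:
  assumes "A \<in> carrier_mat n n" "adj A = A"
  shows "tr_fun (\<lambda>x. c * g x) A = c * tr_fun g A"
proof -
  obtain U d where "unitary n U" "A = U * real_diag n d * adj U"
    using hermitian_spectral_decomp[OF assms] by blast
  then show ?thesis by (simp add: tr_fun_decomp sum_distrib_left)
qed

lemma tr_fun_uminus:
  assumes "A \<in> carrier_mat n n" "adj A = A"
  shows "tr_fun (\<lambda>x. - g x) A = - tr_fun g A"
  using tr_fun_cmult[OF assms, of "-1" g] by simp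

lemma tr_fun_unitary_conj:
  assumes A: "A \<in> carrier_mat n n" "adj A = A" and U: "unitary n U"
  shows "tr_fun f (U * A * adj U) = tr_fun f A"
proof -
  obtain V d where V: "unitary n V" and Ad: "A = V * real_diag n d * adj V"
    using hermitian_spectral_decomp[OF A] by blast
  have "U * A * adj U = (U * V) * real_diag n d * adj (U * V)"
    unfolding Ad by (rule unitary_conj_conj[OF U V real_diag_carrier])
  then show ?thesis
    using tr_fun_decomp[OF unitary_mult[OF U V]] tr_fun_decomp[OF V Ad] by simp
qed

lemma sum_lessThan_add: "(\<Sum>j<n + m. f j) = (\<Sum>j<n. f j) + (\<Sum>j<m. f (n + j))" for n m :: nat
  by (induction m) (auto simp: add.assoc)

lemma tr_fun_block_diag:
  assumes A: "A \<in> carrier_mat n n" "adj A = A" and B: "B \<in> carrier_mat m m" "adj B = B"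
  shows "tr_fun g (four_block_mat A (0\<^sub>m n m) (0\<^sub>m m n) B) = tr_fun g A + tr_fun g B"
proof -
  obtain U d where U: "unitary n U" and Ad: "A = U * real_diag n d * adj U"
    using hermitian_spectral_decomp[OF A] by blast
  obtain V e where V: "unitary m V" and Be: "B = V * real_diag m e * adj V"
    using hermitian_spectral_decomp[OF B] by blast
  have "four_block_mat A (0\<^sub>m n m) (0\<^sub>m m n) B = four_block_mat U (0\<^sub>m n m) (0\<^sub>m m n) V
      * real_diag (n + m) (\<lambda>i. if i < n then d i else e (i - n)) * adj (four_block_mat U (0\<^sub>m n m) (0\<^sub>m m n) V)"
    unfolding Ad Be by (rule block_diag_decomp[OF U V])
  from tr_fun_decomp[OF unitary_block_diag[OF U V] this] show ?thesis
    unfolding tr_fun_decomp[OF U Ad] tr_fun_decomp[OF V Be] sum_lessThan_add by simp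
qed

lemma tr_fun_zero: "tr_fun g (0\<^sub>m n n) = of_nat n * g 0"
proof -
  have "0\<^sub>m n n = 1\<^sub>m n * real_diag n (\<lambda>_. 0) * adj (1\<^sub>m n)"
    by (rule eq_matI) auto
  from tr_fun_decomp[OF unitary_one this] show ?thesis by simp
qed

lemma hermitian_adj_mult_self: "adj (adj Z * Z) = adj Z * Z"
  by (simp add: adj_mult)

lemma tr_fun_adj_mult_comm:
  assumes Z: "Z \<in> carrier_mat N N"
  shows "tr_fun g (adj Z * Z) = tr_fun g (Z * adj Z)"
proof -
  have "adj Z * Z \<in> carrier_mat N N" "Z * adj Z \<in> carrier_mat N N"
    using Z by (meson adj_carrier mult_carrier_mat)+
  then obtain P h Q k where P: "unitary N P" and H: "adj Z * Z = P * real_diag N h * adj P"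
    and Q: "unitary N Q" and K: "Z * adj Z = Q * real_diag N k * adj Q"
    using hermitian_spectral_decomp hermitian_adj_mult_self[of Z] hermitian_adj_mult_self[of "adj Z"]
    by (metis adj_adj)
  have "(\<Sum>i<N. g (h i)) = (\<Sum>i<N. g (k i))"
  proof (rule sum_fun_eq_if_power_sums_eq[where d = h and e = k])
    fix j
    show "(\<Sum>i<N. h i ^ j) = (\<Sum>i<N. k i ^ j)"
    proof (cases j)
      case (Suc j')
      have "complex_of_real (\<Sum>i<N. h i ^ j) = complex_of_real (\<Sum>i<N. k i ^ j)"
        using mtrace_pow_mult_comm[of "adj Z" N N Z j'] Z
        unfolding Suc mtrace_pow_decomp[OF P, of h, symmetric] mtrace_pow_decomp[OF Q, of k, symmetric]
          H[symmetric] K[symmetric]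
        by simp
      then show ?thesis by (simp only: of_real_eq_iff)
    qed simp
  qed
  then show ?thesis unfolding tr_fun_decomp[OF P H] tr_fun_decomp[OF Q K] .
qed

subsection \<open>Peierls' inequality\<close>

lemma unitary_conj_diag_entry:
  assumes "A \<in> carrier_mat n n" "V \<in> carrier_mat n n" "j < n"
  shows "(adj V * A * V) $$ (j,j) = (\<Sum>l<n. \<Sum>m<n. cnj (V $$ (m,j)) * A $$ (m,l) * V $$ (l,j))"
proof -
  have "(adj V * A * V) $$ (j,j) = (\<Sum>l<n. (adj V * A) $$ (j,l) * V $$ (l,j))"
    using assms by (intro index_mult_mat_sum) auto
  also have "\<dots> = (\<Sum>l<n. \<Sum>m<n. cnj (V $$ (m,j)) * A $$ (m,l) * V $$ (l,j))"
    using assms by (intro sum.cong refl, subst index_mult_mat_sum[of "adj V" n n A n])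
      (auto simp: sum_distrib_right)
  finally show ?thesis .
qed

lemma real_diag_conj_diag_entry:
  assumes G: "G \<in> carrier_mat n n" and j: "j < n"
  shows "(G * real_diag n d * adj G) $$ (j,j) = complex_of_real (\<Sum>k<n. (cmod (G $$ (j,k)))\<^sup>2 * d k)"
proof -
  have "(G * real_diag n d * adj G) $$ (j,j) = (\<Sum>l<n. (G * real_diag n d) $$ (j,l) * adj G $$ (l,j))"
    using G j by (intro index_mult_mat_sum) auto
  also have "\<dots> = (\<Sum>l<n. complex_of_real ((cmod (G $$ (j,l)))\<^sup>2 * d l))"
    using G j by (intro sum.cong) (auto simp: mult_real_diag_index cnj_mult_self mult_ac simp del: index_mult_mat)
  finally show ?thesis by simp
qed

text \<open>The diagonal of \<open>V\<^sup>\<dagger> H V\<close> is obtained from the eigenvalues of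
  \<open>H\<close> by the doubly stochastic matrix \<open>|(V\<^sup>\<dagger> U)\<^sub>j\<^sub>k|\<^sup>2\<close>, so Jensen's inequality applies row by
  row and the column sums collapse.\<close>

lemma peierls_inequality:
  assumes U: "unitary n U" and V: "unitary n V" and H: "H = U * real_diag n d * adj U"
    and conv: "convex_on C f" and dC: "\<And>i. i < n \<Longrightarrow> d i \<in> C"
  shows "(\<Sum>j<n. f (Re ((adj V * H * V) $$ (j,j)))) \<le> (\<Sum>k<n. f (d k))"
proof -
  define G where "G = adj V * U"
  have uG: "unitary n G" unfolding G_def by (rule unitary_mult[OF unitary_adj[OF V] U])
  have "adj V * H * V = adj V * (U * real_diag n d * adj U) * adj (adj V)" unfolding H by simp
  also have "\<dots> = G * real_diag n d * adj G"
    unfolding G_def by (rule unitary_conj_conj[OF unitary_adj[OF V] U real_diag_carrier])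
  finally have diag: "Re ((adj V * H * V) $$ (j,j)) = (\<Sum>k<n. (cmod (G $$ (j,k)))\<^sup>2 * d k)"
    if "j < n" for j
    using real_diag_conj_diag_entry[OF unitaryD(1)[OF uG] that] by simp
  have "(\<Sum>j<n. f (Re ((adj V * H * V) $$ (j,j)))) \<le> (\<Sum>j<n. \<Sum>k<n. (cmod (G $$ (j,k)))\<^sup>2 * f (d k))"
  proof (rule sum_mono)
    fix j assume "j \<in> {..<n}"
    then have j: "j < n" and ne: "{..<n} \<noteq> {}" by auto
    show "f (Re ((adj V * H * V) $$ (j,j))) \<le> (\<Sum>k<n. (cmod (G $$ (j,k)))\<^sup>2 * f (d k))"
      unfolding diag[OF j]
      using convex_on_sum[OF finite_lessThan ne conv, of "\<lambda>k. (cmod (G $$ (j,k)))\<^sup>2" d]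
        unitary_row_norm[OF uG j] dC j by auto
  qed
  also have "\<dots> = (\<Sum>k<n. (\<Sum>j<n. (cmod (G $$ (j,k)))\<^sup>2) * f (d k))"
    by (subst sum.swap) (simp add: sum_distrib_right)
  also have "\<dots> = (\<Sum>k<n. f (d k))"
    by (simp add: unitary_col_norm[OF uG])
  finally show ?thesis .
qed

lemma adj_mult_self_diag:
  assumes B: "B \<in> carrier_mat m n" and j: "j < n"
  shows "(adj B * B) $$ (j,j) = complex_of_real (\<Sum>l<m. (cmod (B $$ (l,j)))\<^sup>2)"
proof -
  have "(adj B * B) $$ (j,j) = (\<Sum>l<m. adj B $$ (j,l) * B $$ (l,j))"
    using B j by (intro index_mult_mat_sum) auto
  also have "\<dots> = (\<Sum>l<m. complex_of_real ((cmod (B $$ (l,j)))\<^sup>2))"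
    using B j by (intro sum.cong) (auto simp: cnj_mult_self)
  finally show ?thesis by simp
qed

lemma adj_mult_self_eigenvalues_nonneg:
  assumes Z: "Z \<in> carrier_mat N N" and Q: "unitary N Q"
    and H: "adj Z * Z = Q * real_diag N h * adj Q" and j: "j < N"
  shows "0 \<le> h j"
proof -
  have "adj (Z * Q) * (Z * Q) = real_diag N h"
    using Z unitaryD[OF Q] unitary_conj_inverse[OF Q real_diag_carrier, of h]
    by (simp add: adj_mult assoc_mult_mat_dims H[symmetric])
  then have "complex_of_real (h j) = complex_of_real (\<Sum>l<N. (cmod ((Z * Q) $$ (l,j)))\<^sup>2)"
    using adj_mult_self_diag[of "Z * Q" N N j] Z unitaryD[OF Q] j by simp
  then show ?thesis by (simp only: of_real_eq_iff) (simp add: sum_nonneg)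
qed

lemma density_conj_diag_nonneg:
  assumes rho: "density n \<rho>" and V: "V \<in> carrier_mat n n" and j: "j < n"
  shows "0 \<le> Re ((adj V * \<rho> * V) $$ (j,j))"
proof -
  have r: "\<rho> \<in> carrier_mat n n" using rho unfolding density_def by auto
  have "(adj V * \<rho> * V) $$ (j,j) = scalar_prod (map_vec cnj (col V j)) (\<rho> *\<^sub>v col V j)"
    unfolding unitary_conj_diag_entry[OF r V j] using r V j
    by (subst sum.swap) (auto simp: scalar_prod_def lessThan_atLeast0 mult_mat_vec_def sum_distrib_left mult.assoc
        intro!: sum.cong)
  then show ?thesis using rho V unfolding density_def by auto
qed

lemma density_eigenvalues:
  assumes rho: "density n \<rho>" and U: "unitary n U" and rd: "\<rho> = U * real_diag n d * adj U"
  shows "\<And>i. i < n \<Longrightarrow> 0 \<le> d i" and "(\<Sum>i<n. d i) = 1" and "\<And>i. i < n \<Longrightarrow> d i \<le> 1"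
proof -
  have D: "adj U * \<rho> * U = real_diag n d"
    unfolding rd by (rule unitary_conj_inverse[OF U real_diag_carrier])
  show nonneg: "0 \<le> d i" if "i < n" for i
    using density_conj_diag_nonneg[OF rho unitaryD(1)[OF U] that] that unfolding D by simp
  have "complex_of_real (\<Sum>i<n. d i) = 1"
    using rho unfolding density_def rd mtrace_unitary_conj[OF U real_diag_carrier] mtrace_real_diag
    by simp
  then show sum: "(\<Sum>i<n. d i) = 1" by (simp only: of_real_eq_1_iff)
  show "d i \<le> 1" if "i < n" for i
    using member_le_sum[of i "{..<n}" d] nonneg that sum by simp
qed

lemma density_spectral_decomp:
  assumes "density n \<rho>"
  obtains U d where "unitary n U" "\<rho> = U * real_diag n d * adj U"
  using hermitian_spectral_decomp assms unfolding density_def by blast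

lemma density_midpoint:
  assumes r: "density n \<rho>" and s: "density n \<sigma>"
  shows "density n ((1/2) \<cdot>\<^sub>m (\<rho> + \<sigma>))"
proof -
  have rc: "\<rho> \<in> carrier_mat n n" and sc: "\<sigma> \<in> carrier_mat n n"
    using r s unfolding density_def by auto
  have "adj ((1/2) \<cdot>\<^sub>m (\<rho> + \<sigma>)) = (1/2) \<cdot>\<^sub>m (adj \<rho> + adj \<sigma>)"
    using rc sc by (intro eq_matI) auto
  moreover have "mtrace ((1/2) \<cdot>\<^sub>m (\<rho> + \<sigma>)) = (mtrace \<rho> + mtrace \<sigma>) / 2"
    using rc sc unfolding mtrace_def by (simp add: sum.distrib sum_divide_distrib add_divide_distrib)
  moreover have "0 \<le> Re (scalar_prod (map_vec cnj v) (((1/2) \<cdot>\<^sub>m (\<rho> + \<sigma>)) *\<^sub>v v))"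
    if v: "v \<in> carrier_vec n" for v
  proof -
    have eq: "scalar_prod (map_vec cnj v) (((1/2) \<cdot>\<^sub>m (\<rho> + \<sigma>)) *\<^sub>v v)
      = (scalar_prod (map_vec cnj v) (\<rho> *\<^sub>v v) + scalar_prod (map_vec cnj v) (\<sigma> *\<^sub>v v)) / 2"
      using rc sc v
      by (simp add: scalar_prod_def mult_mat_vec_def lessThan_atLeast0 sum.distrib sum_divide_distrib
          sum_distrib_left algebra_simps add_divide_distrib)
    have "0 \<le> Re (scalar_prod (map_vec cnj v) (\<rho> *\<^sub>v v))" "0 \<le> Re (scalar_prod (map_vec cnj v) (\<sigma> *\<^sub>v v))"
      using r s v unfolding density_def by auto
    then show ?thesis unfolding eq by simp
  qed
  ultimately show ?thesis using r s rc sc unfolding density_def by auto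
qed

lemma density_diff_hermitian:
  assumes "density n \<rho>1" "density n \<rho>2"
  shows "\<rho>1 - \<rho>2 \<in> carrier_mat n n" "adj (\<rho>1 - \<rho>2) = \<rho>1 - \<rho>2"
  using assms unfolding density_def by (auto simp: adj_minus)

lemma tr_pow_pos:
  assumes r: "density n \<rho>"
  shows "0 < tr_pow \<rho> a"
proof -
  obtain U d where U: "unitary n U" and rd: "\<rho> = U * real_diag n d * adj U"
    using density_spectral_decomp[OF r] .
  obtain i where i: "i < n" "d i \<noteq> 0"
    using density_eigenvalues(2)[OF r U rd] by (metis sum.neutral lessThan_iff zero_neq_one)
  have "0 < d i powr a" using i by simp
  also have "\<dots> \<le> (\<Sum>i<n. d i powr a)" by (rule member_le_sum) (use i in auto)
  finally show ?thesis unfolding tr_pow_eq_tr_fun tr_fun_decomp[OF U rd] .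
qed

lemma tr_pow_le_one:
  assumes r: "density n \<rho>" and a: "1 \<le> a"
  shows "tr_pow \<rho> a \<le> 1"
proof -
  obtain U d where U: "unitary n U" and rd: "\<rho> = U * real_diag n d * adj U"
    using density_spectral_decomp[OF r] .
  have "(\<Sum>i<n. d i powr a) \<le> (\<Sum>i<n. d i)"
    using powr_mono'[of 1 a] density_eigenvalues(1,3)[OF r U rd] a by (intro sum_mono) fastforce
  then show ?thesis unfolding tr_pow_eq_tr_fun tr_fun_decomp[OF U rd] density_eigenvalues(2)[OF r U rd] .
qed

lemma pure_state_idempotent:
  assumes "pure_state m \<tau>"
  shows "\<tau> * \<tau> = \<tau>"
proof -
  from assms obtain v where v: "v \<in> carrier_vec m" and nv: "scalar_prod (map_vec cnj v) v = 1"
    and tv: "\<tau> = mat m m (\<lambda>(i,j). v $ i * cnj (v $ j))" unfolding pure_state_def by auto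
  have tc: "\<tau> \<in> carrier_mat m m" unfolding tv by auto
  have nv': "(\<Sum>k<m. cnj (v $ k) * v $ k) = 1"
    using nv v by (simp add: scalar_prod_def lessThan_atLeast0)
  show ?thesis
  proof (rule eq_matI)
    fix i j assume "i < dim_row \<tau>" "j < dim_col \<tau>"
    then have i: "i < m" and j: "j < m" using tc by auto
    have "(\<tau> * \<tau>) $$ (i,j) = (\<Sum>k<m. \<tau> $$ (i,k) * \<tau> $$ (k,j))"
      using tc i j by (intro index_mult_mat_sum) auto
    also have "\<dots> = (\<Sum>k<m. v $ i * cnj (v $ j) * (cnj (v $ k) * v $ k))"
      using i j by (intro sum.cong) (auto simp: tv mult_ac)
    also have "\<dots> = \<tau> $$ (i,j)"
      unfolding sum_distrib_left[symmetric] nv' using i j by (simp add: tv)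
    finally show "(\<tau> * \<tau>) $$ (i,j) = \<tau> $$ (i,j)" .
  qed (use tc in auto)
qed

lemma idempotent_eigenvalues:
  assumes U: "unitary n U" and A: "A = U * real_diag n d * adj U" and idem: "A * A = A" and i: "i < n"
  shows "d i = 0 \<or> d i = 1"
proof -
  have "real_diag n (\<lambda>i. d i * d i) = real_diag n d"
    using idem unfolding A unitary_conj_mult[OF U real_diag_carrier real_diag_carrier] real_diag_mult
    by (metis unitary_conj_inverse[OF U] real_diag_carrier)
  then have "real_diag n (\<lambda>i. d i * d i) $$ (i,i) = real_diag n d $$ (i,i)" by simp
  then show ?thesis using i by simp
qed

lemma tr_pow_pure_state:
  assumes p: "pure_state m \<tau>" and t: "density m \<tau>"
  shows "tr_pow \<tau> a = 1"
proof -
  obtain U d where U: "unitary m U" and td: "\<tau> = U * real_diag m d * adj U"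
    using density_spectral_decomp[OF t] .
  have "d i powr a = d i" if "i < m" for i
    using idempotent_eigenvalues[OF U td pure_state_idempotent[OF p] that] by fastforce
  then show ?thesis
    unfolding tr_pow_eq_tr_fun tr_fun_decomp[OF U td] using density_eigenvalues(2)[OF t U td] by simp
qed

lemma powr_convex_on_pos:
  assumes "p \<le> 0 \<or> 1 \<le> p"
  shows "convex_on {0<..} (\<lambda>x::real. x powr p)"
proof (rule f''_ge0_imp_convex[where f' = "\<lambda>x. p * x powr (p - 1)" and f'' = "\<lambda>x. p * (p - 1) * x powr (p - 2)"])
  fix x :: real assume "x \<in> {0<..}"
  then show "((\<lambda>x. x powr p) has_real_derivative p * x powr (p - 1)) (at x)"
    and "((\<lambda>x. p * x powr (p - 1)) has_real_derivative p * (p - 1) * x powr (p - 2)) (at x)"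
    by (auto intro!: derivative_eq_intros simp: algebra_simps)
  have "0 \<le> p * (p - 1)" using assms by (auto simp: mult_nonpos_nonpos)
  then show "0 \<le> p * (p - 1) * x powr (p - 2)" by simp
qed auto

lemma powr_concave_on_pos:
  assumes "0 \<le> p" "p \<le> 1"
  shows "concave_on {0<..} (\<lambda>x::real. x powr p)"
proof (rule f''_le0_imp_concave[where f' = "\<lambda>x. p * x powr (p - 1)" and f'' = "\<lambda>x. p * (p - 1) * x powr (p - 2)"])
  fix x :: real assume "x \<in> {0<..}"
  then show "((\<lambda>x. x powr p) has_real_derivative p * x powr (p - 1)) (at x)"
    and "((\<lambda>x. p * x powr (p - 1)) has_real_derivative p * (p - 1) * x powr (p - 2)) (at x)"
    by (auto intro!: derivative_eq_intros simp: algebra_simps)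
  have "p * (p - 1) \<le> 0" using assms by (simp add: mult_nonneg_nonpos)
  then show "p * (p - 1) * x powr (p - 2) \<le> 0" by (simp add: mult_nonpos_nonneg)
qed auto

lemma convex_on_nonneg_if_pos:
  fixes f :: "real \<Rightarrow> real"
  assumes pos: "convex_on {0<..} f"
    and origin: "\<And>t y. 0 < t \<Longrightarrow> t < 1 \<Longrightarrow> 0 < y \<Longrightarrow> f (t * y) \<le> (1 - t) * f 0 + t * f y"
  shows "convex_on {0..} f"
proof (rule convex_on_linorderI)
  fix t x y :: real assume t: "0 < t" "t < 1" and x: "x \<in> {0..}" and y: "y \<in> {0..}" and xy: "x < y"
  show "f ((1 - t) *\<^sub>R x + t *\<^sub>R y) \<le> (1 - t) * f x + t * f y"
  proof (cases "x = 0")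
    case True
    then show ?thesis using origin[OF t] xy by simp
  next
    case False
    then show ?thesis using convex_onD[OF pos, of t x y] t x xy by simp
  qed
qed (simp add: convex_real_interval)

lemma powr_convex_on_nonneg:
  assumes p: "1 \<le> p"
  shows "convex_on {0..} (\<lambda>x::real. x powr p)"
proof (rule convex_on_nonneg_if_pos[OF powr_convex_on_pos])
  fix t y :: real assume t: "0 < t" "t < 1" and y: "0 < y"
  have "t powr p \<le> t" using powr_mono'[of 1 p t] t p by simp
  then show "(t * y) powr p \<le> (1 - t) * 0 powr p + t * y powr p"
    using y by (simp add: powr_mult mult_right_mono)
qed (use p in auto)

lemma powr_concave_on_nonneg:
  assumes p: "0 \<le> p" "p \<le> 1"
  shows "concave_on {0..} (\<lambda>x::real. x powr p)"
  unfolding concave_on_def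
proof (rule convex_on_nonneg_if_pos)
  show "convex_on {0<..} (\<lambda>x::real. - (x powr p))"
    using powr_concave_on_pos[OF p] unfolding concave_on_def .
  fix t y :: real assume t: "0 < t" "t < 1" and y: "0 < y"
  have "t \<le> t powr p" using powr_mono'[of p 1 t] t p by simp
  then show "- ((t * y) powr p) \<le> (1 - t) * - (0 powr p) + t * - (y powr p)"
    using y by (simp add: powr_mult mult_right_mono)
qed

lemma convex_on_midpoint:
  fixes f :: "real \<Rightarrow> real"
  assumes "convex_on C f" "x \<in> C" "y \<in> C"
  shows "f ((x + y) / 2) \<le> (f x + f y) / 2"
  using convex_onD[OF assms(1), of "1/2" x y] assms(2,3) by (simp add: add_divide_distrib)

lemma concave_on_midpoint:
  fixes f :: "real \<Rightarrow> real"
  assumes "concave_on C f" "x \<in> C" "y \<in> C"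
  shows "(f x + f y) / 2 \<le> f ((x + y) / 2)"
  using convex_on_midpoint[of C "\<lambda>x. - f x" x y] assms unfolding concave_on_def by simp

lemma powr_above_tangent:
  fixes a b p :: real
  assumes a: "1 \<le> a" and b: "0 \<le> b" and p: "0 \<le> p"
  shows "b powr a + a * b powr (a - 1) * (p - b) \<le> p powr a"
proof (cases "b = 0 \<or> p = 0")
  case True
  have "b powr a = b * b powr (a - 1)" using b by (cases "b = 0") (simp_all add: powr_diff)
  moreover have "b * b powr (a - 1) \<le> a * (b * b powr (a - 1))"
    using mult_right_mono[of 1 a "b * b powr (a - 1)"] a b by simp
  ultimately show ?thesis using True by (auto simp: algebra_simps)
next
  case False
  then have "a * b powr (a - 1) * (p - b) \<le> p powr a - b powr a"
    using a b p by (intro f''_imp_f'[where C = "{0<..}" and f'' = "\<lambda>x. a * (a - 1) * x powr (a - 2)"])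
      (auto intro!: derivative_eq_intros simp: algebra_simps)
  then show ?thesis by simp
qed

lemma powr_lipschitz_unit_interval:
  fixes x y p :: real
  assumes p: "1 \<le> p" and x: "0 \<le> x" "x \<le> 1" and y: "0 \<le> y" "y \<le> 1"
  shows "\<bar>x powr p - y powr p\<bar> \<le> p * \<bar>x - y\<bar>"
proof -
  have le: "u powr p - v powr p \<le> p * (u - v)" if "0 \<le> v" "v \<le> u" "u \<le> 1" for u v :: real
  proof -
    have "u powr p - v powr p \<le> p * u powr (p - 1) * (u - v)"
      using powr_above_tangent[OF p, of u v] that by (simp add: algebra_simps)
    also have "\<dots> \<le> p * 1 * (u - v)"
      using that p by (intro mult_right_mono mult_left_mono powr_le1) auto
    finally show ?thesis by simp
  qed
  show ?thesis
    using le[of y x] le[of x y] powr_mono2[of p x y] powr_mono2[of p y x] x y p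
    by (cases "y \<le> x") (auto simp: abs_if)
qed

lemma powr_superadditive:
  fixes a b p :: real
  assumes a: "0 \<le> a" and b: "0 \<le> b" and p: "1 \<le> p"
  shows "a powr p + b powr p \<le> (a + b) powr p"
proof (cases "a + b = 0")
  case True
  then have "a = 0" "b = 0" using a b by auto
  then show ?thesis by simp
next
  case False
  have split: "x powr p = x * x powr (p - 1)" if "0 \<le> x" for x :: real
    using that by (cases "x = 0") (simp_all add: powr_diff)
  have "a * a powr (p - 1) + b * b powr (p - 1) \<le> a * (a + b) powr (p - 1) + b * (a + b) powr (p - 1)"
    using a b p by (intro add_mono mult_left_mono powr_mono2) auto
  also have "\<dots> = (a + b) powr p"
    using split[of "a + b"] a b by (simp add: distrib_right)
  finally show ?thesis using split a b by simp
qed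

subsection \<open>Midpoint convexity and superadditivity\<close>

lemma unitary_conj_diag_midpoint:
  assumes "\<rho> \<in> carrier_mat n n" "\<sigma> \<in> carrier_mat n n" "V \<in> carrier_mat n n" "j < n"
  shows "Re ((adj V * ((1/2) \<cdot>\<^sub>m (\<rho> + \<sigma>)) * V) $$ (j,j))
    = (Re ((adj V * \<rho> * V) $$ (j,j)) + Re ((adj V * \<sigma> * V) $$ (j,j))) / 2"
proof -
  have mc: "(1/2) \<cdot>\<^sub>m (\<rho> + \<sigma>) \<in> carrier_mat n n" using assms by simp
  show ?thesis
    unfolding unitary_conj_diag_entry[OF mc assms(3,4)] unitary_conj_diag_entry[OF assms(1,3,4)]
      unitary_conj_diag_entry[OF assms(2,3,4)]
    using assms by (simp add: sum.distrib sum_divide_distrib algebra_simps add_divide_distrib)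
qed

lemma tr_fun_midpoint_convex:
  assumes r: "density n \<rho>" and s: "density n \<sigma>" and g: "convex_on {0..} g"
  shows "tr_fun g ((1/2) \<cdot>\<^sub>m (\<rho> + \<sigma>)) \<le> (tr_fun g \<rho> + tr_fun g \<sigma>) / 2"
proof -
  have rc: "\<rho> \<in> carrier_mat n n" and sc: "\<sigma> \<in> carrier_mat n n" using r s unfolding density_def by auto
  obtain U x where U: "unitary n U" and rd: "\<rho> = U * real_diag n x * adj U"
    using density_spectral_decomp[OF r] .
  obtain V y where V: "unitary n V" and sd: "\<sigma> = V * real_diag n y * adj V"
    using density_spectral_decomp[OF s] .
  obtain W z where W: "unitary n W" and md: "(1/2) \<cdot>\<^sub>m (\<rho> + \<sigma>) = W * real_diag n z * adj W"
    using density_spectral_decomp[OF density_midpoint[OF r s]] .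
  note w = unitaryD[OF W]
  define p where "p = (\<lambda>j. Re ((adj W * \<rho> * W) $$ (j,j)))"
  define q where "q = (\<lambda>j. Re ((adj W * \<sigma> * W) $$ (j,j)))"
  have "z j = (p j + q j) / 2" if "j < n" for j
    using unitary_conj_diag_midpoint[OF rc sc w(1) that] unitary_conj_inverse[OF W real_diag_carrier, of z]
      that unfolding p_def q_def md[symmetric] by simp
  moreover have "0 \<le> p j" "0 \<le> q j" if "j < n" for j
    unfolding p_def q_def using density_conj_diag_nonneg[OF _ w(1) that] r s by auto
  ultimately have "(\<Sum>j<n. g (z j)) \<le> (\<Sum>j<n. (g (p j) + g (q j)) / 2)"
    using convex_onD[OF g, of "1/2"] by (intro sum_mono) (simp add: add_divide_distrib)
  also have "\<dots> = ((\<Sum>j<n. g (p j)) + (\<Sum>j<n. g (q j))) / 2"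
    by (simp only: sum_divide_distrib[symmetric] sum.distrib)
  also have "\<dots> \<le> ((\<Sum>k<n. g (x k)) + (\<Sum>k<n. g (y k))) / 2"
    using peierls_inequality[OF U W rd g] peierls_inequality[OF V W sd g]
      density_eigenvalues(1)[OF r U rd] density_eigenvalues(1)[OF s V sd]
    unfolding p_def q_def by fastforce
  finally show ?thesis unfolding tr_fun_decomp[OF U rd] tr_fun_decomp[OF V sd] tr_fun_decomp[OF W md] .
qed

lemma tr_fun_midpoint_concave:
  assumes r: "density n \<rho>" and s: "density n \<sigma>" and g: "concave_on {0..} g"
  shows "(tr_fun g \<rho> + tr_fun g \<sigma>) / 2 \<le> tr_fun g ((1/2) \<cdot>\<^sub>m (\<rho> + \<sigma>))"
proof -
  have herm: "X \<in> carrier_mat n n" "adj X = X" if "density n X" for X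
    using that unfolding density_def by auto
  from tr_fun_midpoint_convex[OF r s g[unfolded concave_on_def]] show ?thesis
    unfolding tr_fun_uminus[OF herm[OF r]] tr_fun_uminus[OF herm[OF s]]
      tr_fun_uminus[OF herm[OF density_midpoint[OF r s]]] by simp
qed

lemma density_half_sqrt:
  assumes r: "density n \<rho>" and U: "unitary n U" and rd: "\<rho> = U * real_diag n x * adj U"
  defines "R \<equiv> U * real_diag n (\<lambda>i. sqrt (x i / 2))"
  shows "R * adj R = (1/2) \<cdot>\<^sub>m \<rho>"
proof -
  note u = unitaryD[OF U]
  have "R * adj R = U * (real_diag n (\<lambda>i. sqrt (x i / 2)) * real_diag n (\<lambda>i. sqrt (x i / 2))) * adj U"
    unfolding R_def using u by (simp add: adj_mult assoc_mult_mat_dims)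
  also have "real_diag n (\<lambda>i. sqrt (x i / 2)) * real_diag n (\<lambda>i. sqrt (x i / 2)) = complex_of_real (1/2) \<cdot>\<^sub>m real_diag n x"
    using density_eigenvalues(1)[OF r U rd] by (auto simp: real_diag_mult real_diag_smult intro!: eq_matI)
  finally show ?thesis unfolding rd by (simp add: unitary_conj_smult[OF U])
qed

lemma block_row_mult_adj:
  assumes R: "R \<in> carrier_mat n n" and S: "S \<in> carrier_mat n n"
  shows "four_block_mat R S (0\<^sub>m n n) (0\<^sub>m n n) * adj (four_block_mat R S (0\<^sub>m n n) (0\<^sub>m n n))
    = four_block_mat (R * adj R + S * adj S) (0\<^sub>m n n) (0\<^sub>m n n) (0\<^sub>m n n)"
  using R S adj_four_block_mat[OF R S zero_carrier_mat zero_carrier_mat]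
  by (simp add: mult_four_block_mat[of _ n n _ n _ n _ _ n _ n])

lemma block_row_adj_mult_diag:
  fixes a b :: "nat \<Rightarrow> real"
  assumes U: "unitary n U" and V: "unitary n V" and j: "j < n + n"
  defines "Z \<equiv> four_block_mat (U * real_diag n a) (V * real_diag n b) (0\<^sub>m n n) (0\<^sub>m n n)"
  shows "Re ((adj Z * Z) $$ (j,j)) = (if j < n then (a j)\<^sup>2 else (b (j - n))\<^sup>2)"
proof -
  have UV: "U * real_diag n a \<in> carrier_mat n n" "V * real_diag n b \<in> carrier_mat n n"
    using unitaryD(1)[OF U] unitaryD(1)[OF V] by auto
  then have Z: "Z \<in> carrier_mat (n + n) (n + n)" unfolding Z_def by auto
  have lower: "Z $$ (n + l, j) = 0" if "l < n" for l
    using that j UV unitaryD(1)[OF U] unitaryD(1)[OF V] by (simp add: Z_def carrier_matD)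
  have "Re ((adj Z * Z) $$ (j,j)) = (\<Sum>l<n. (cmod (Z $$ (l,j)))\<^sup>2)"
    using adj_mult_self_diag[OF Z j] unfolding sum_lessThan_add by (simp add: lower)
  also have "\<dots> = (if j < n then (\<Sum>l<n. (cmod ((U * real_diag n a) $$ (l,j)))\<^sup>2)
      else (\<Sum>l<n. (cmod ((V * real_diag n b) $$ (l,j - n)))\<^sup>2))"
    using j UV by (auto simp: Z_def intro!: sum.cong simp del: index_mult_mat)
  finally show ?thesis
    using j unitary_mult_real_diag_col_norm[OF U] unitary_mult_real_diag_col_norm[OF V] by simp
qed

text \<open>For \<open>R = U diag(\<surd>(x/2))\<close>, \<open>S = V diag(\<surd>(y/2))\<close> and
  \<open>Z = [R S; 0 0]\<close>, the matrix \<open>Z Z\<^sup>\<dagger>\<close> is \<open>(\<rho>+\<sigma>)/2 \<oplus> 0\<close> while the diagonal of \<open>Z\<^sup>\<dagger> Z\<close> is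
  \<open>(x/2, y/2)\<close>; Peierls' inequality for \<open>Z\<^sup>\<dagger> Z\<close> in the standard basis does the rest.\<close>

lemma tr_fun_midpoint_superadditive:
  assumes r: "density n \<rho>" and s: "density n \<sigma>" and g: "convex_on {0..} g" and g0: "g 0 = 0"
  shows "tr_fun (\<lambda>t. g (t / 2)) \<rho> + tr_fun (\<lambda>t. g (t / 2)) \<sigma> \<le> tr_fun g ((1/2) \<cdot>\<^sub>m (\<rho> + \<sigma>))"
proof -
  have rc: "\<rho> \<in> carrier_mat n n" and sc: "\<sigma> \<in> carrier_mat n n" using r s unfolding density_def by auto
  obtain U x where U: "unitary n U" and rd: "\<rho> = U * real_diag n x * adj U"
    using density_spectral_decomp[OF r] .
  obtain V y where V: "unitary n V" and sd: "\<sigma> = V * real_diag n y * adj V"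
    using density_spectral_decomp[OF s] .
  define R where "R = U * real_diag n (\<lambda>i. sqrt (x i / 2))"
  define S where "S = V * real_diag n (\<lambda>i. sqrt (y i / 2))"
  define Z where "Z = four_block_mat R S (0\<^sub>m n n) (0\<^sub>m n n)"
  have RS: "R \<in> carrier_mat n n" "S \<in> carrier_mat n n"
    unfolding R_def S_def using unitaryD(1)[OF U] unitaryD(1)[OF V] by auto
  then have Z: "Z \<in> carrier_mat (n + n) (n + n)" unfolding Z_def by auto
  have "Z * adj Z = four_block_mat (R * adj R + S * adj S) (0\<^sub>m n n) (0\<^sub>m n n) (0\<^sub>m n n)"
    unfolding Z_def by (rule block_row_mult_adj[OF RS])
  also have "R * adj R + S * adj S = (1/2) \<cdot>\<^sub>m (\<rho> + \<sigma>)"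
    unfolding R_def S_def density_half_sqrt[OF r U rd] density_half_sqrt[OF s V sd]
    using rc sc by (simp add: add_smult_distrib_left_mat)
  finally have "tr_fun g (adj Z * Z) = tr_fun g ((1/2) \<cdot>\<^sub>m (\<rho> + \<sigma>))"
    using tr_fun_adj_mult_comm[OF Z] tr_fun_block_diag[of _ n _ n g] density_midpoint[OF r s]
    unfolding density_def by (simp add: tr_fun_zero g0)
  moreover obtain Q h where Q: "unitary (n + n) Q" and H: "adj Z * Z = Q * real_diag (n + n) h * adj Q"
    using hermitian_spectral_decomp[of "adj Z * Z" "n + n"] Z hermitian_adj_mult_self
    by (metis adj_carrier mult_carrier_mat)
  moreover have "Re ((adj Z * Z) $$ (j,j)) = (if j < n then x j / 2 else y (j - n) / 2)" if "j < n + n" for j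
    using block_row_adj_mult_diag[OF U V that] that density_eigenvalues(1)[OF r U rd, of j]
      density_eigenvalues(1)[OF s V sd, of "j - n"] unfolding Z_def R_def S_def by auto
  moreover have "adj (1\<^sub>m (n + n)) * (adj Z * Z) * 1\<^sub>m (n + n) = adj Z * Z"
    using Z by (simp add: assoc_mult_mat_dims)
  ultimately have "(\<Sum>j<n + n. g (if j < n then x j / 2 else y (j - n) / 2)) \<le> tr_fun g ((1/2) \<cdot>\<^sub>m (\<rho> + \<sigma>))"
    using peierls_inequality[OF Q unitary_one H g] adj_mult_self_eigenvalues_nonneg[OF Z Q H]
    unfolding tr_fun_decomp[OF Q H] by simp
  then show ?thesis
    unfolding tr_fun_decomp[OF U rd] tr_fun_decomp[OF V sd] sum_lessThan_add by simp
qed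

lemma tr_pow_midpoint_superadditive:
  assumes r: "density n \<rho>" and s: "density n \<sigma>" and a: "1 \<le> a"
  shows "2 powr (- a) * (tr_pow \<rho> a + tr_pow \<sigma> a) \<le> tr_pow ((1/2) \<cdot>\<^sub>m (\<rho> + \<sigma>)) a"
proof -
  have "(\<lambda>t::real. (t / 2) powr a) = (\<lambda>t. 2 powr (- a) * t powr a)"
    by (auto simp: powr_divide powr_minus_divide)
  moreover have "X \<in> carrier_mat n n" "adj X = X" if "density n X" for X
    using that unfolding density_def by auto
  ultimately show ?thesis
    using tr_fun_midpoint_superadditive[OF r s powr_convex_on_nonneg[OF a]]
      tr_fun_cmult[of \<rho> n "2 powr (- a)" "\<lambda>t. t powr a"] tr_fun_cmult[of \<sigma> n "2 powr (- a)" "\<lambda>t. t powr a"] r s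
    unfolding tr_pow_eq_tr_fun by (simp add: distrib_left)
qed

subsection \<open>Continuity in trace norm\<close>

lemma unitary_conj_diag_diff:
  assumes "A \<in> carrier_mat n n" "B \<in> carrier_mat n n" "V \<in> carrier_mat n n" "j < n"
  shows "Re ((adj V * (A - B) * V) $$ (j,j)) = Re ((adj V * A * V) $$ (j,j)) - Re ((adj V * B * V) $$ (j,j))"
proof -
  have AB: "A - B \<in> carrier_mat n n" using assms(2) by (rule minus_carrier_mat)
  show ?thesis
    unfolding unitary_conj_diag_entry[OF AB assms(3,4)] unitary_conj_diag_entry[OF assms(1,3,4)]
      unitary_conj_diag_entry[OF assms(2,3,4)]
    using assms by (simp add: sum_subtractf algebra_simps)
qed

lemma sum_unitary_conj_diag:
  assumes "A \<in> carrier_mat n n" "unitary n V"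
  shows "(\<Sum>j<n. Re ((adj V * A * V) $$ (j,j))) = Re (mtrace A)"
proof -
  have "mtrace (adj V * A * V) = mtrace A"
    using mtrace_unitary_conj[OF unitary_adj[OF assms(2)] assms(1)] by simp
  moreover have "mtrace (adj V * A * V) = (\<Sum>j<n. (adj V * A * V) $$ (j,j))"
    unfolding mtrace_def using assms unitaryD[OF assms(2)] by simp
  ultimately have "Re (\<Sum>j<n. (adj V * A * V) $$ (j,j)) = Re (mtrace A)" by simp
  then show ?thesis by (simp add: Re_sum)
qed

lemma zero_sum_weighted_lower_bound:
  fixes c e :: "nat \<Rightarrow> real"
  assumes sum0: "(\<Sum>k<n. e k) = 0" and c: "\<And>k. k < n \<Longrightarrow> 0 \<le> c k \<and> c k \<le> a"
  shows "- (a / 2 * (\<Sum>k<n. \<bar>e k\<bar>)) \<le> (\<Sum>k<n. c k * e k)"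
proof -
  have "(\<Sum>k<n. a / 2 * e k) = 0"
    by (simp only: sum_distrib_left[symmetric] sum0 mult_zero_right)
  then have "(\<Sum>k<n. c k * e k) = (\<Sum>k<n. (c k - a / 2) * e k)"
    by (simp add: left_diff_distrib sum_subtractf)
  moreover have "\<bar>\<Sum>k<n. (c k - a / 2) * e k\<bar> \<le> (\<Sum>k<n. a / 2 * \<bar>e k\<bar>)"
  proof -
    have "\<bar>\<Sum>k<n. (c k - a / 2) * e k\<bar> \<le> (\<Sum>k<n. \<bar>c k - a / 2\<bar> * \<bar>e k\<bar>)"
      using sum_abs[of "\<lambda>k. (c k - a / 2) * e k" "{..<n}"] by (simp add: abs_mult)
    also have "\<dots> \<le> (\<Sum>k<n. a / 2 * \<bar>e k\<bar>)"
    proof (rule sum_mono)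
      fix k assume "k \<in> {..<n}"
      then have "0 \<le> c k" "c k \<le> a" using c by auto
      then have "\<bar>c k - a / 2\<bar> \<le> a / 2" by arith
      then show "\<bar>c k - a / 2\<bar> * \<bar>e k\<bar> \<le> a / 2 * \<bar>e k\<bar>" by (rule mult_right_mono) simp
    qed
    finally show ?thesis .
  qed
  moreover have "(\<Sum>k<n. a / 2 * \<bar>e k\<bar>) = a / 2 * (\<Sum>k<n. \<bar>e k\<bar>)"
    by (rule sum_distrib_left[symmetric])
  ultimately show ?thesis by arith
qed

text \<open>The tangent line of \<open>t\<^sup>a\<close> at \<open>y\<^sub>k \<in> [0,1]\<close> has slope in \<open>[0,a]\<close>, and the
  increments \<open>p\<^sub>k - y\<^sub>k\<close> sum to zero.\<close>

lemma sum_powr_tangent_bound: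
  fixes p y :: "nat \<Rightarrow> real"
  assumes a: "1 \<le> a" and y: "\<And>k. k < n \<Longrightarrow> 0 \<le> y k \<and> y k \<le> 1" and p: "\<And>k. k < n \<Longrightarrow> 0 \<le> p k"
    and sums: "(\<Sum>k<n. p k) = (\<Sum>k<n. y k)"
  shows "(\<Sum>k<n. y k powr a) - (\<Sum>k<n. p k powr a) \<le> a / 2 * (\<Sum>k<n. \<bar>p k - y k\<bar>)"
proof -
  define c where "c = (\<lambda>k. a * y k powr (a - 1))"
  have "(\<Sum>k<n. y k powr a) + (\<Sum>k<n. c k * (p k - y k)) \<le> (\<Sum>k<n. p k powr a)"
    unfolding sum.distrib[symmetric] c_def using powr_above_tangent[OF a] y p by (intro sum_mono) auto
  moreover have "0 \<le> c k \<and> c k \<le> a" if "k < n" for k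
    using mult_left_mono[OF powr_le1[of "a - 1" "y k"]] y[OF that] a unfolding c_def by simp
  then have "- (a / 2 * (\<Sum>k<n. \<bar>p k - y k\<bar>)) \<le> (\<Sum>k<n. c k * (p k - y k))"
    using sums by (intro zero_sum_weighted_lower_bound) (simp_all add: sum_subtractf)
  ultimately show ?thesis by linarith
qed

lemma tr_pow_diff_le:
  assumes r1: "density n \<rho>1" and r2: "density n \<rho>2" and a: "1 \<le> a"
  shows "tr_pow \<rho>2 a - tr_pow \<rho>1 a \<le> a * trace_norm (\<rho>1 - \<rho>2)"
proof -
  have c1: "\<rho>1 \<in> carrier_mat n n" and c2: "\<rho>2 \<in> carrier_mat n n" and t1: "mtrace \<rho>1 = 1"
    using r1 r2 unfolding density_def by auto
  obtain U1 x where U1: "unitary n U1" and d1: "\<rho>1 = U1 * real_diag n x * adj U1"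
    using density_spectral_decomp[OF r1] .
  obtain U2 y where U2: "unitary n U2" and d2: "\<rho>2 = U2 * real_diag n y * adj U2"
    using density_spectral_decomp[OF r2] .
  obtain W \<delta> where W: "unitary n W" and dd: "\<rho>1 - \<rho>2 = W * real_diag n \<delta> * adj W"
    using hermitian_spectral_decomp density_diff_hermitian[OF r1 r2] by blast
  note u2 = unitaryD[OF U2]
  define p where "p = (\<lambda>k. Re ((adj U2 * \<rho>1 * U2) $$ (k,k)))"
  have diff: "Re ((adj U2 * (\<rho>1 - \<rho>2) * U2) $$ (k,k)) = p k - y k" if "k < n" for k
    using unitary_conj_diag_diff[OF c1 c2 u2(1) that] unitary_conj_inverse[OF U2 real_diag_carrier, of y] that
    unfolding p_def d2[symmetric] by simp
  have "(\<Sum>k<n. p k) = (\<Sum>k<n. y k)"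
    unfolding p_def sum_unitary_conj_diag[OF c1 U2] t1 density_eigenvalues(2)[OF r2 U2 d2] by simp
  then have "(\<Sum>k<n. y k powr a) - (\<Sum>k<n. p k powr a) \<le> a / 2 * (\<Sum>k<n. \<bar>p k - y k\<bar>)"
    using density_eigenvalues(1,3)[OF r2 U2 d2] density_conj_diag_nonneg[OF r1 u2(1)] unfolding p_def
    by (intro sum_powr_tangent_bound[OF a]) auto
  moreover have "(\<Sum>k<n. p k powr a) \<le> (\<Sum>k<n. x k powr a)"
    unfolding p_def using density_eigenvalues(1)[OF r1 U1 d1]
    by (intro peierls_inequality[OF U1 U2 d1 powr_convex_on_nonneg[OF a]]) auto
  moreover have "(\<Sum>k<n. \<bar>p k - y k\<bar>) \<le> (\<Sum>k<n. \<bar>\<delta> k\<bar>)"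
    using peierls_inequality[OF W U2 dd, of UNIV abs] convex_on_dist[of UNIV "0::real"] diff
    by (simp add: dist_real_def)
  then have "a / 2 * (\<Sum>k<n. \<bar>p k - y k\<bar>) \<le> a / 2 * (\<Sum>k<n. \<bar>\<delta> k\<bar>)"
    using a by (intro mult_left_mono) auto
  ultimately have "(\<Sum>k<n. y k powr a) - (\<Sum>k<n. x k powr a) \<le> a / 2 * (\<Sum>k<n. \<bar>\<delta> k\<bar>)"
    by linarith
  then show ?thesis
    unfolding tr_pow_eq_tr_fun tr_fun_decomp[OF U1 d1] tr_fun_decomp[OF U2 d2] trace_norm_decomp[OF W dd] by simp
qed

lemma trace_norm_smult:
  assumes A: "A \<in> carrier_mat n n" "adj A = A"
  shows "trace_norm (complex_of_real c \<cdot>\<^sub>m A) = \<bar>c\<bar> * trace_norm A"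
proof -
  obtain W \<delta> where W: "unitary n W" and Ad: "A = W * real_diag n \<delta> * adj W"
    using hermitian_spectral_decomp[OF A] by blast
  have "complex_of_real c \<cdot>\<^sub>m A = W * real_diag n (\<lambda>i. c * \<delta> i) * adj W"
    unfolding Ad real_diag_smult[symmetric] by (rule unitary_conj_smult[OF W real_diag_carrier, symmetric])
  then have "trace_norm (complex_of_real c \<cdot>\<^sub>m A) = (\<Sum>i<n. \<bar>c * \<delta> i\<bar>) / 2"
    by (rule trace_norm_decomp[OF W])
  then show ?thesis
    unfolding trace_norm_decomp[OF W Ad] by (simp add: abs_mult sum_distrib_left[symmetric])
qed

lemma tr_pow_lipschitz:
  assumes r1: "density n \<rho>1" and r2: "density n \<rho>2" and a: "1 \<le> a"
  shows "\<bar>tr_pow \<rho>1 a - tr_pow \<rho>2 a\<bar> \<le> a * trace_norm (\<rho>1 - \<rho>2)"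
proof -
  have "\<rho>2 - \<rho>1 = complex_of_real (-1) \<cdot>\<^sub>m (\<rho>1 - \<rho>2)"
    using r1 r2 unfolding density_def by (intro eq_matI) auto
  then have "trace_norm (\<rho>2 - \<rho>1) = trace_norm (\<rho>1 - \<rho>2)"
    using trace_norm_smult[OF density_diff_hermitian[OF r1 r2], of "-1"] by simp
  then show ?thesis
    using tr_pow_diff_le[OF r1 r2 a] tr_pow_diff_le[OF r2 r1 a] by (auto simp: abs_le_iff)
qed

lemma tr_pow_midpoint_lipschitz:
  assumes r1: "density n \<rho>1" and r2: "density n \<rho>2" and s: "density n \<sigma>" and a: "1 \<le> a"
  shows "\<bar>tr_pow ((1/2) \<cdot>\<^sub>m (\<rho>1 + \<sigma>)) a - tr_pow ((1/2) \<cdot>\<^sub>m (\<rho>2 + \<sigma>)) a\<bar> \<le> a / 2 * trace_norm (\<rho>1 - \<rho>2)"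
proof -
  have "(1/2) \<cdot>\<^sub>m (\<rho>1 + \<sigma>) - (1/2) \<cdot>\<^sub>m (\<rho>2 + \<sigma>) = complex_of_real (1/2) \<cdot>\<^sub>m (\<rho>1 - \<rho>2)"
    using r1 r2 s unfolding density_def by (intro eq_matI) (auto simp: algebra_simps)
  then have half: "trace_norm ((1/2) \<cdot>\<^sub>m (\<rho>1 + \<sigma>) - (1/2) \<cdot>\<^sub>m (\<rho>2 + \<sigma>)) = trace_norm (\<rho>1 - \<rho>2) / 2"
    using trace_norm_smult[OF density_diff_hermitian[OF r1 r2], of "1/2"] by simp
  show ?thesis
    using tr_pow_lipschitz[OF density_midpoint[OF r1 s] density_midpoint[OF r2 s] a] unfolding half by simp
qed

subsection \<open>Tensor products and unitary invariance\<close>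

lemma kron_carrier: "A \<in> carrier_mat n n' \<Longrightarrow> B \<in> carrier_mat m m' \<Longrightarrow> kron A B \<in> carrier_mat (n * m) (n' * m')"
  unfolding kron_def by auto

lemma kron_dims[simp]:
  "dim_row (kron A B) = dim_row A * dim_row B" "dim_col (kron A B) = dim_col A * dim_col B"
  unfolding kron_def by auto

lemma kron_index:
  "i < dim_row A * dim_row B \<Longrightarrow> j < dim_col A * dim_col B \<Longrightarrow>
    kron A B $$ (i,j) = A $$ (i div dim_row B, j div dim_col B) * B $$ (i mod dim_row B, j mod dim_col B)"
  unfolding kron_def by auto

lemma div_mod_less: "l < n * m \<Longrightarrow> l div m < n \<and> l mod m < (m::nat)"
  by (metis less_mult_imp_div_less mod_less_divisor mult_0_right neq0_conv not_less_zero mult.commute)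

lemma sum_div_mod: "(\<Sum>l<n * m. f (l div m) (l mod m)) = (\<Sum>p<n. \<Sum>q<m. f p q)" for n m :: nat
proof (cases "m = 0")
  case False
  show ?thesis
  proof (induction n)
    case (Suc n)
    have "(\<Sum>l<Suc n * m. f (l div m) (l mod m)) = (\<Sum>l<n * m + m. f (l div m) (l mod m))"
      by (simp add: add.commute)
    also have "\<dots> = (\<Sum>l<n * m. f (l div m) (l mod m)) + (\<Sum>q<m. f ((n * m + q) div m) ((n * m + q) mod m))"
      by (rule sum_lessThan_add)
    also have "(\<Sum>q<m. f ((n * m + q) div m) ((n * m + q) mod m)) = (\<Sum>q<m. f n q)"
      using False by (intro sum.cong) auto
    finally show ?case using Suc by simp
  qed simp
qed simp

lemma kron_mult:
  assumes A: "A \<in> carrier_mat n n" "C \<in> carrier_mat n n" and B: "B \<in> carrier_mat m m" "D \<in> carrier_mat m m"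
  shows "kron A B * kron C D = kron (A * C) (B * D)"
proof (rule eq_matI)
  fix i j assume "i < dim_row (kron (A * C) (B * D))" "j < dim_col (kron (A * C) (B * D))"
  then have i: "i < n * m" and j: "j < n * m" using A B by auto
  from div_mod_less[OF i] div_mod_less[OF j] have ij: "i div m < n" "i mod m < m" "j div m < n" "j mod m < m"
    by auto
  have "(kron A B * kron C D) $$ (i,j) = (\<Sum>l<n * m. kron A B $$ (i,l) * kron C D $$ (l,j))"
    using i j A B by (intro index_mult_mat_sum) (auto intro: kron_carrier)
  also have "\<dots> = (\<Sum>l<n * m. (\<lambda>p q. A $$ (i div m, p) * B $$ (i mod m, q) * (C $$ (p, j div m) * D $$ (q, j mod m)))
      (l div m) (l mod m))"
    using i j A B by (intro sum.cong) (auto simp: kron_index dest: div_mod_less)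
  also have "\<dots> = (\<Sum>p<n. \<Sum>q<m. A $$ (i div m, p) * B $$ (i mod m, q) * (C $$ (p, j div m) * D $$ (q, j mod m)))"
    by (rule sum_div_mod)
  also have "\<dots> = (\<Sum>p<n. A $$ (i div m, p) * C $$ (p, j div m)) * (\<Sum>q<m. B $$ (i mod m, q) * D $$ (q, j mod m))"
    by (simp add: sum_product mult_ac)
  also have "\<dots> = (A * C) $$ (i div m, j div m) * (B * D) $$ (i mod m, j mod m)"
    using index_mult_mat_sum[OF A(1,2) ij(1,3)] index_mult_mat_sum[OF B(1,2) ij(2,4)] by simp
  also have "\<dots> = kron (A * C) (B * D) $$ (i,j)"
    using i j A B by (simp add: kron_index)
  finally show "(kron A B * kron C D) $$ (i,j) = kron (A * C) (B * D) $$ (i,j)" .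
qed (use A B in auto)

lemma adj_kron: "adj (kron A B) = kron (adj A) (adj B)"
proof (rule eq_matI)
  fix i j assume "i < dim_row (kron (adj A) (adj B))" "j < dim_col (kron (adj A) (adj B))"
  then have i: "i < dim_col A * dim_col B" and j: "j < dim_row A * dim_row B" by auto
  show "adj (kron A B) $$ (i,j) = kron (adj A) (adj B) $$ (i,j)"
    using i j div_mod_less[OF i] div_mod_less[OF j] by (simp add: kron_index)
qed auto

lemma kron_real_diag:
  "kron (real_diag n d) (real_diag m e) = real_diag (n * m) (\<lambda>l. d (l div m) * e (l mod m))"
proof (rule eq_matI)
  fix i j assume "i < dim_row (real_diag (n * m) (\<lambda>l. d (l div m) * e (l mod m)))"
    "j < dim_col (real_diag (n * m) (\<lambda>l. d (l div m) * e (l mod m)))"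
  then have i: "i < n * m" and j: "j < n * m" by auto
  then have "i div m = j div m \<and> i mod m = j mod m \<longleftrightarrow> i = j"
    by (metis div_mult_mod_eq)
  then show "kron (real_diag n d) (real_diag m e) $$ (i,j) = real_diag (n * m) (\<lambda>l. d (l div m) * e (l mod m)) $$ (i,j)"
    using i j div_mod_less[OF i] div_mod_less[OF j] by (auto simp: kron_index)
qed auto

lemma unitary_kron:
  assumes U: "unitary n U" and V: "unitary m V"
  shows "unitary (n * m) (kron U V)"
proof (rule unitaryI)
  note u = unitaryD[OF U] and v = unitaryD[OF V]
  show "kron U V \<in> carrier_mat (n * m) (n * m)" by (rule kron_carrier[OF u(1) v(1)])
  have one: "real_diag k (\<lambda>_. 1) = 1\<^sub>m k" for k
    by (rule eq_matI) auto
  have "kron (1\<^sub>m n) (1\<^sub>m m) = 1\<^sub>m (n * m)"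
    using kron_real_diag[of n "\<lambda>_. 1" m "\<lambda>_. 1"] by (simp add: one)
  then show "adj (kron U V) * kron U V = 1\<^sub>m (n * m)"
    unfolding adj_kron kron_mult[OF u(2) u(1) v(2) v(1)] u v .
qed

lemma kron_decomp:
  assumes U: "unitary n U" and V: "unitary m V"
  shows "kron (U * real_diag n d * adj U) (V * real_diag m e * adj V) =
    kron U V * real_diag (n * m) (\<lambda>l. d (l div m) * e (l mod m)) * adj (kron U V)"
  using unitaryD[OF U] unitaryD[OF V]
  by (simp add: kron_mult[symmetric, of _ n _ _ m] adj_kron kron_real_diag)

lemma tr_fun_kron:
  assumes A: "A \<in> carrier_mat n n" "adj A = A" and B: "B \<in> carrier_mat m m" "adj B = B"
    and mult: "\<And>x y. g (x * y) = g x * g y"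
  shows "tr_fun g (kron A B) = tr_fun g A * tr_fun g B"
proof -
  obtain U d where U: "unitary n U" and Ad: "A = U * real_diag n d * adj U"
    using hermitian_spectral_decomp[OF A] by blast
  obtain V e where V: "unitary m V" and Be: "B = V * real_diag m e * adj V"
    using hermitian_spectral_decomp[OF B] by blast
  have "tr_fun g (kron A B) = (\<Sum>l<n * m. g (d (l div m) * e (l mod m)))"
    unfolding Ad Be by (rule tr_fun_decomp[OF unitary_kron[OF U V] kron_decomp[OF U V]])
  also have "\<dots> = (\<Sum>p<n. g (d p)) * (\<Sum>q<m. g (e q))"
    unfolding mult sum_div_mod[of "\<lambda>p q. g (d p) * g (e q)"] by (simp add: sum_product)
  finally show ?thesis unfolding tr_fun_decomp[OF U Ad] tr_fun_decomp[OF V Be] .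
qed

lemma tr_pow_kron:
  assumes "density n \<rho>" "density m \<tau>"
  shows "tr_pow (kron \<rho> \<tau>) a = tr_pow \<rho> a * tr_pow \<tau> a"
  using assms tr_fun_kron[of \<rho> n \<tau> m "\<lambda>x. x powr a"] powr_mult unfolding density_def tr_pow_eq_tr_fun
  by blast

lemma midpoint_kron:
  assumes r: "\<rho> \<in> carrier_mat n n" and s: "\<sigma> \<in> carrier_mat n n" and t: "\<tau> \<in> carrier_mat m m"
  shows "(1/2) \<cdot>\<^sub>m (kron \<rho> \<tau> + kron \<sigma> \<tau>) = kron ((1/2) \<cdot>\<^sub>m (\<rho> + \<sigma>)) \<tau>"
proof (rule eq_matI)
  fix i j assume "i < dim_row (kron ((1/2) \<cdot>\<^sub>m (\<rho> + \<sigma>)) \<tau>)" "j < dim_col (kron ((1/2) \<cdot>\<^sub>m (\<rho> + \<sigma>)) \<tau>)"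
  then have i: "i < n * m" and j: "j < n * m" using r s t by auto
  then show "((1/2) \<cdot>\<^sub>m (kron \<rho> \<tau> + kron \<sigma> \<tau>)) $$ (i,j) = kron ((1/2) \<cdot>\<^sub>m (\<rho> + \<sigma>)) \<tau> $$ (i,j)"
    using r s t div_mod_less[OF i] div_mod_less[OF j] by (simp add: kron_index algebra_simps)
qed (use r s t in auto)

lemma midpoint_unitary_conj:
  assumes r: "\<rho> \<in> carrier_mat n n" and s: "\<sigma> \<in> carrier_mat n n" and U: "unitary n U"
  shows "(1/2) \<cdot>\<^sub>m (U * \<rho> * adj U + U * \<sigma> * adj U) = U * ((1/2) \<cdot>\<^sub>m (\<rho> + \<sigma>)) * adj U"
proof -
  note u = unitaryD[OF U]
  have "U * (\<rho> + \<sigma>) * adj U = U * \<rho> * adj U + U * \<sigma> * adj U"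
    using r s u mult_add_distrib_mat[of U n n \<rho> n \<sigma>] add_mult_distrib_mat[of "U * \<rho>" n n "U * \<sigma>" "adj U" n]
    by simp
  then show ?thesis using r s by (simp add: unitary_conj_smult[OF U])
qed

lemma tr_pow_unitary_conj:
  assumes "density n \<rho>" "unitary n U"
  shows "tr_pow (U * \<rho> * adj U) a = tr_pow \<rho> a"
  using assms tr_fun_unitary_conj unfolding density_def tr_pow_eq_tr_fun by blast

subsection \<open>The quantum (\<alpha>,\<beta>) Jensen-Shannon divergence\<close>

definition J_of_traces :: "real \<Rightarrow> real \<Rightarrow> real \<Rightarrow> real \<Rightarrow> real \<Rightarrow> real" where
  "J_of_traces \<alpha> \<beta> m a b = 1 / ((1 - \<alpha>) * \<beta>) * (m powr \<beta> - a powr \<beta> / 2 - b powr \<beta> / 2)"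

lemma J_ab_eq_J_of_traces:
  "J_ab \<alpha> \<beta> \<rho> \<sigma> = J_of_traces \<alpha> \<beta> (tr_pow ((1/2) \<cdot>\<^sub>m (\<rho> + \<sigma>)) \<alpha>) (tr_pow \<rho> \<alpha>) (tr_pow \<sigma> \<alpha>)"
proof -
  have "k * (x - 1) - k * (y - 1) / 2 - k * (z - 1) / 2 = k * (x - y / 2 - z / 2)" for k x y z :: real
    by (simp add: field_simps)
  then show ?thesis unfolding J_ab_def S_ab_def J_of_traces_def .
qed

lemma J_of_traces_nonneg_of_concave:
  assumes \<alpha>: "0 < \<alpha>" "\<alpha> < 1" and \<beta>: "\<beta> < 0 \<or> (0 < \<beta> \<and> \<beta> < 1)"
    and pos: "0 < a" "0 < b" and m: "(a + b) / 2 \<le> m"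
  shows "0 \<le> J_of_traces \<alpha> \<beta> m a b"
  using \<beta>
proof
  assume \<beta>: "\<beta> < 0"
  have "m powr \<beta> \<le> ((a + b) / 2) powr \<beta>"
    using \<beta> pos m by (intro powr_mono2') auto
  also have "\<dots> \<le> (a powr \<beta> + b powr \<beta>) / 2"
    using convex_on_midpoint[OF powr_convex_on_pos, of \<beta> a b] \<beta> pos by auto
  finally have "m powr \<beta> - a powr \<beta> / 2 - b powr \<beta> / 2 \<le> 0" by simp
  moreover have "1 / ((1 - \<alpha>) * \<beta>) \<le> 0" using \<alpha> \<beta> by (simp add: mult_pos_neg less_imp_le)
  ultimately show ?thesis unfolding J_of_traces_def by (rule mult_nonpos_nonpos[rotated])
next
  assume \<beta>: "0 < \<beta> \<and> \<beta> < 1"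
  have "(a powr \<beta> + b powr \<beta>) / 2 \<le> ((a + b) / 2) powr \<beta>"
    using concave_on_midpoint[OF powr_concave_on_nonneg, of \<beta> a b] \<beta> pos by auto
  also have "\<dots> \<le> m powr \<beta>"
    using \<beta> pos m by (intro powr_mono2) auto
  finally show ?thesis unfolding J_of_traces_def using \<alpha> \<beta> by simp
qed

lemma J_of_traces_nonneg_of_convex:
  assumes \<alpha>: "1 < \<alpha>" and \<beta>: "1 \<le> \<beta>"
    and pos: "0 < a" "0 < b" "0 < m" and m: "m \<le> (a + b) / 2"
  shows "0 \<le> J_of_traces \<alpha> \<beta> m a b"
proof -
  have "m powr \<beta> \<le> ((a + b) / 2) powr \<beta>"
    using \<beta> pos m by (intro powr_mono2) auto
  also have "\<dots> \<le> (a powr \<beta> + b powr \<beta>) / 2"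
    using convex_on_midpoint[OF powr_convex_on_nonneg[OF \<beta>], of a b] pos by auto
  finally have "m powr \<beta> - a powr \<beta> / 2 - b powr \<beta> / 2 \<le> 0" by simp
  moreover have "1 / ((1 - \<alpha>) * \<beta>) \<le> 0" using \<alpha> \<beta> by (simp add: mult_neg_pos less_imp_le)
  ultimately show ?thesis unfolding J_of_traces_def by (rule mult_nonpos_nonpos[rotated])
qed

lemma J_of_traces_upper_bound:
  assumes \<alpha>: "1 < \<alpha>" and \<beta>: "1 \<le> \<beta>"
    and ab: "0 < a" "a \<le> 1" "0 < b" "b \<le> 1" and m: "2 powr (- \<alpha>) * (a + b) \<le> m"
  shows "J_of_traces \<alpha> \<beta> m a b \<le> 1 / ((1 - \<alpha>) * \<beta>) * (2 powr (1 - \<alpha> * \<beta>) - 1)"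
proof -
  define q where "q = 2 powr (- (\<alpha> * \<beta>))"
  have "q * (a powr \<beta> + b powr \<beta>) \<le> q * (a + b) powr \<beta>"
    unfolding q_def using powr_superadditive[of a b \<beta>] ab \<beta> by (intro mult_left_mono) auto
  also have "\<dots> = (2 powr (- \<alpha>) * (a + b)) powr \<beta>"
    unfolding q_def using ab by (simp add: powr_mult powr_powr)
  also have "\<dots> \<le> m powr \<beta>"
    using \<beta> ab m by (intro powr_mono2) auto
  finally have m\<beta>: "q * (a powr \<beta> + b powr \<beta>) \<le> m powr \<beta>" .
  have "1 * 1 \<le> \<alpha> * \<beta>" using \<alpha> \<beta> by (intro mult_mono) auto
  then have "q \<le> 2 powr (-1)" unfolding q_def by (intro powr_mono) auto
  then have "(q - 1/2) * 2 \<le> (q - 1/2) * (a powr \<beta> + b powr \<beta>)"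
    using powr_le1[of \<beta> a] powr_le1[of \<beta> b] \<beta> ab by (intro mult_left_mono_neg) (auto simp: powr_minus)
  moreover have "2 powr (1 - \<alpha> * \<beta>) = 2 * q"
    unfolding q_def by (simp add: powr_diff powr_minus divide_inverse)
  ultimately have "2 powr (1 - \<alpha> * \<beta>) - 1 \<le> m powr \<beta> - a powr \<beta> / 2 - b powr \<beta> / 2"
    using m\<beta> by (simp add: algebra_simps)
  moreover have "1 / ((1 - \<alpha>) * \<beta>) \<le> 0" using \<alpha> \<beta> by (simp add: mult_nonpos_nonneg)
  ultimately show ?thesis unfolding J_of_traces_def by (rule mult_left_mono_neg)
qed

lemma J_of_traces_scale:
  "J_of_traces \<alpha> \<beta> (m * y) (a * y) (b * y) = y powr \<beta> * J_of_traces \<alpha> \<beta> m a b"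
  unfolding J_of_traces_def by (simp add: powr_mult algebra_simps)

lemma J_of_traces_lipschitz:
  assumes \<alpha>: "1 < \<alpha>" and \<beta>: "1 \<le> \<beta>"
    and unit: "0 \<le> a1" "a1 \<le> 1" "0 \<le> a2" "a2 \<le> 1" "0 \<le> m1" "m1 \<le> 1" "0 \<le> m2" "m2 \<le> 1"
    and da: "\<bar>a1 - a2\<bar> \<le> \<alpha> * t" and dm: "\<bar>m1 - m2\<bar> \<le> \<alpha> / 2 * t"
  shows "\<bar>J_of_traces \<alpha> \<beta> m1 a1 b - J_of_traces \<alpha> \<beta> m2 a2 b\<bar> \<le> \<alpha> / (\<alpha> - 1) * t"
proof -
  have "\<bar>(m1 powr \<beta> - m2 powr \<beta>) - (a1 powr \<beta> - a2 powr \<beta>) / 2\<bar>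
      \<le> \<bar>m1 powr \<beta> - m2 powr \<beta>\<bar> + \<bar>a1 powr \<beta> - a2 powr \<beta>\<bar> / 2"
    using abs_triangle_ineq4[of "m1 powr \<beta> - m2 powr \<beta>" "(a1 powr \<beta> - a2 powr \<beta>) / 2"] by simp
  also have "\<dots> \<le> \<beta> * \<bar>m1 - m2\<bar> + \<beta> * \<bar>a1 - a2\<bar> / 2"
    using powr_lipschitz_unit_interval[OF \<beta>] unit by (intro add_mono divide_right_mono) auto
  also have "\<dots> \<le> \<beta> * (\<alpha> / 2 * t) + \<beta> * (\<alpha> * t) / 2"
    using \<beta> da dm by (intro add_mono divide_right_mono mult_left_mono) auto
  finally have diff: "\<bar>(m1 powr \<beta> - m2 powr \<beta>) - (a1 powr \<beta> - a2 powr \<beta>) / 2\<bar> \<le> \<beta> * (\<alpha> * t)"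
    by (simp add: mult_ac)
  have "J_of_traces \<alpha> \<beta> m1 a1 b - J_of_traces \<alpha> \<beta> m2 a2 b
      = 1 / ((1 - \<alpha>) * \<beta>) * ((m1 powr \<beta> - m2 powr \<beta>) - (a1 powr \<beta> - a2 powr \<beta>) / 2)"
  proof -
    have "k * (x1 - y1 / 2 - z / 2) - k * (x2 - y2 / 2 - z / 2) = k * ((x1 - x2) - (y1 - y2) / 2)"
      for k x1 x2 y1 y2 z :: real
      by (simp add: field_simps)
    then show ?thesis unfolding J_of_traces_def .
  qed
  then have "\<bar>J_of_traces \<alpha> \<beta> m1 a1 b - J_of_traces \<alpha> \<beta> m2 a2 b\<bar>
      = 1 / ((\<alpha> - 1) * \<beta>) * \<bar>(m1 powr \<beta> - m2 powr \<beta>) - (a1 powr \<beta> - a2 powr \<beta>) / 2\<bar>"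
    using \<alpha> \<beta> by (simp add: abs_mult abs_divide)
  also have "\<dots> \<le> 1 / ((\<alpha> - 1) * \<beta>) * (\<beta> * (\<alpha> * t))"
    using \<alpha> \<beta> by (intro mult_left_mono[OF diff]) auto
  also have "\<dots> = \<alpha> / (\<alpha> - 1) * t" using \<beta> by simp
  finally show ?thesis .
qed

lemma J_ab_nonneg:
  assumes r: "density n \<rho>" and s: "density n \<sigma>"
    and \<alpha>\<beta>: "(0 < \<alpha> \<and> \<alpha> < 1 \<and> (\<beta> < 0 \<or> (0 < \<beta> \<and> \<beta> < 1))) \<or> (1 < \<alpha> \<and> 1 \<le> \<beta>)"
  shows "0 \<le> J_ab \<alpha> \<beta> \<rho> \<sigma>"
  using \<alpha>\<beta>
proof
  assume \<alpha>\<beta>: "0 < \<alpha> \<and> \<alpha> < 1 \<and> (\<beta> < 0 \<or> (0 < \<beta> \<and> \<beta> < 1))"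
  have "(tr_pow \<rho> \<alpha> + tr_pow \<sigma> \<alpha>) / 2 \<le> tr_pow ((1/2) \<cdot>\<^sub>m (\<rho> + \<sigma>)) \<alpha>"
    using tr_fun_midpoint_concave[OF r s powr_concave_on_nonneg[of \<alpha>]] \<alpha>\<beta> by (simp add: tr_pow_eq_tr_fun)
  then show ?thesis
    unfolding J_ab_eq_J_of_traces using \<alpha>\<beta> tr_pow_pos[OF r] tr_pow_pos[OF s]
    by (intro J_of_traces_nonneg_of_concave) auto
next
  assume \<alpha>\<beta>: "1 < \<alpha> \<and> 1 \<le> \<beta>"
  have "tr_pow ((1/2) \<cdot>\<^sub>m (\<rho> + \<sigma>)) \<alpha> \<le> (tr_pow \<rho> \<alpha> + tr_pow \<sigma> \<alpha>) / 2"
    using tr_fun_midpoint_convex[OF r s powr_convex_on_nonneg[of \<alpha>]] \<alpha>\<beta> by (simp add: tr_pow_eq_tr_fun)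
  then show ?thesis
    unfolding J_ab_eq_J_of_traces using \<alpha>\<beta> tr_pow_pos[OF r] tr_pow_pos[OF s] tr_pow_pos[OF density_midpoint[OF r s]]
    by (intro J_of_traces_nonneg_of_convex) auto
qed

lemma J_ab_upper_bound:
  assumes r: "density n \<rho>" and s: "density n \<sigma>" and \<alpha>: "1 < \<alpha>" and \<beta>: "1 \<le> \<beta>"
  shows "J_ab \<alpha> \<beta> \<rho> \<sigma> \<le> 1 / ((1 - \<alpha>) * \<beta>) * (2 powr (1 - \<alpha> * \<beta>) - 1)"
  unfolding J_ab_eq_J_of_traces using \<alpha> \<beta>
  by (intro J_of_traces_upper_bound tr_pow_pos[OF r] tr_pow_pos[OF s] tr_pow_le_one[OF r] tr_pow_le_one[OF s]
      tr_pow_midpoint_superadditive[OF r s]) auto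

lemma J_ab_kron:
  assumes r: "density n \<rho>" and s: "density n \<sigma>" and t: "density m \<tau>"
    and \<alpha>: "\<alpha> \<noteq> 1" and \<beta>: "\<beta> \<noteq> 0"
  shows "J_ab \<alpha> \<beta> (kron \<rho> \<tau>) (kron \<sigma> \<tau>) = (1 + (1 - \<alpha>) * \<beta> * S_ab \<alpha> \<beta> \<tau>) * J_ab \<alpha> \<beta> \<rho> \<sigma>"
proof -
  define y where "y = tr_pow \<tau> \<alpha>"
  note mid = density_midpoint[OF r s]
  have mid_kron: "(1/2) \<cdot>\<^sub>m (kron \<rho> \<tau> + kron \<sigma> \<tau>) = kron ((1/2) \<cdot>\<^sub>m (\<rho> + \<sigma>)) \<tau>"
    using r s t unfolding density_def by (intro midpoint_kron) auto
  have "J_ab \<alpha> \<beta> (kron \<rho> \<tau>) (kron \<sigma> \<tau>)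
      = J_of_traces \<alpha> \<beta> (tr_pow ((1/2) \<cdot>\<^sub>m (\<rho> + \<sigma>)) \<alpha> * y) (tr_pow \<rho> \<alpha> * y) (tr_pow \<sigma> \<alpha> * y)"
    unfolding J_ab_eq_J_of_traces y_def mid_kron tr_pow_kron[OF mid t] tr_pow_kron[OF r t] tr_pow_kron[OF s t] by simp
  also have "\<dots> = y powr \<beta> * J_ab \<alpha> \<beta> \<rho> \<sigma>"
    unfolding J_ab_eq_J_of_traces by (rule J_of_traces_scale)
  also have "y powr \<beta> = 1 + (1 - \<alpha>) * \<beta> * S_ab \<alpha> \<beta> \<tau>"
    unfolding S_ab_def y_def using \<alpha> \<beta> by simp
  finally show ?thesis .
qed

lemma J_ab_unitary_conj:
  assumes r: "density n \<rho>" and s: "density n \<sigma>" and U: "unitary n U"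
  shows "J_ab \<alpha> \<beta> (U * \<rho> * adj U) (U * \<sigma> * adj U) = J_ab \<alpha> \<beta> \<rho> \<sigma>"
proof -
  have "(1/2) \<cdot>\<^sub>m (U * \<rho> * adj U + U * \<sigma> * adj U) = U * ((1/2) \<cdot>\<^sub>m (\<rho> + \<sigma>)) * adj U"
    using r s U unfolding density_def by (intro midpoint_unitary_conj) auto
  then show ?thesis
    unfolding J_ab_eq_J_of_traces
    using tr_pow_unitary_conj[OF r U] tr_pow_unitary_conj[OF s U] tr_pow_unitary_conj[OF density_midpoint[OF r s] U]
    by simp
qed

lemma J_ab_comm:
  assumes "\<rho> \<in> carrier_mat n n" "\<sigma> \<in> carrier_mat n n"
  shows "J_ab \<alpha> \<beta> \<rho> \<sigma> = J_ab \<alpha> \<beta> \<sigma> \<rho>"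
  unfolding J_ab_def using comm_add_mat[OF assms] by simp

lemma J_ab_lipschitz:
  assumes r1: "density n \<rho>1" and r2: "density n \<rho>2" and s: "density n \<sigma>" and \<alpha>: "1 < \<alpha>" and \<beta>: "1 \<le> \<beta>"
  shows "\<bar>J_ab \<alpha> \<beta> \<rho>1 \<sigma> - J_ab \<alpha> \<beta> \<rho>2 \<sigma>\<bar> \<le> \<alpha> / (\<alpha> - 1) * trace_norm (\<rho>1 - \<rho>2)"
proof -
  have unit: "0 \<le> tr_pow X \<alpha> \<and> tr_pow X \<alpha> \<le> 1" if "density n X" for X
    using tr_pow_pos[OF that, of \<alpha>] tr_pow_le_one[OF that, of \<alpha>] \<alpha> by simp
  show ?thesis
    unfolding J_ab_eq_J_of_traces
    using unit[OF r1] unit[OF r2] unit[OF density_midpoint[OF r1 s]] unit[OF density_midpoint[OF r2 s]] \<alpha>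
    by (intro J_of_traces_lipschitz[OF \<alpha> \<beta>] tr_pow_lipschitz[OF r1 r2] tr_pow_midpoint_lipschitz[OF r1 r2 s]) auto
qed

theorem theorem1:
  fixes n m :: nat and \<rho> \<sigma> \<rho>1 \<rho>2 \<sigma>1 \<sigma>2 \<tau> U :: "complex mat"
    and \<alpha> \<beta> :: real
  assumes "density n \<rho>" "density n \<sigma>" "density n \<rho>1" "density n \<rho>2"
    "density n \<sigma>1" "density n \<sigma>2" "density m \<tau>"
  shows
   "((0 < \<alpha> \<and> \<alpha> < 1 \<and> (\<beta> < 0 \<or> (0 < \<beta> \<and> \<beta> < 1))) \<or> (1 < \<alpha> \<and> 1 \<le> \<beta>)
        \<longrightarrow> 0 \<le> J_ab \<alpha> \<beta> \<rho> \<sigma>)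
    \<and> (1 < \<alpha> \<and> 1 \<le> \<beta> \<longrightarrow>
        J_ab \<alpha> \<beta> \<rho> \<sigma> \<le> 1 / ((1 - \<alpha>) * \<beta>) * (2 powr (1 - \<alpha> * \<beta>) - 1))
    \<and> (0 < \<alpha> \<and> \<alpha> \<noteq> 1 \<and> \<beta> \<noteq> 0 \<longrightarrow>
        J_ab \<alpha> \<beta> (kron \<rho> \<tau>) (kron \<sigma> \<tau>)
          = (1 + (1 - \<alpha>) * \<beta> * S_ab \<alpha> \<beta> \<tau>) * J_ab \<alpha> \<beta> \<rho> \<sigma>)
    \<and> (0 < \<alpha> \<and> \<alpha> \<noteq> 1 \<and> \<beta> \<noteq> 0 \<and> pure_state m \<tau> \<longrightarrow>
        J_ab \<alpha> \<beta> (kron \<rho> \<tau>) (kron \<sigma> \<tau>) = J_ab \<alpha> \<beta> \<rho> \<sigma>)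
    \<and> (0 < \<alpha> \<and> \<alpha> \<noteq> 1 \<and> \<beta> \<noteq> 0 \<and> unitary n U \<longrightarrow>
        J_ab \<alpha> \<beta> (U * \<rho> * adj U) (U * \<sigma> * adj U) = J_ab \<alpha> \<beta> \<rho> \<sigma>)
    \<and> (0 < \<alpha> \<and> \<alpha> \<noteq> 1 \<and> \<beta> \<noteq> 0 \<longrightarrow> J_ab \<alpha> \<beta> \<rho> \<sigma> = J_ab \<alpha> \<beta> \<sigma> \<rho>)
    \<and> (1 < \<alpha> \<and> 1 \<le> \<beta> \<longrightarrow>
        \<bar>J_ab \<alpha> \<beta> \<rho>1 \<sigma> - J_ab \<alpha> \<beta> \<rho>2 \<sigma>\<bar> \<le> \<alpha> / (\<alpha> - 1) * trace_norm (\<rho>1 - \<rho>2)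
      \<and> \<bar>J_ab \<alpha> \<beta> \<rho> \<sigma>1 - J_ab \<alpha> \<beta> \<rho> \<sigma>2\<bar> \<le> \<alpha> / (\<alpha> - 1) * trace_norm (\<sigma>1 - \<sigma>2))"
proof -
  note r = assms(1) and s = assms(2) and t = assms(7)
  have carriers: "\<rho> \<in> carrier_mat n n" "\<sigma> \<in> carrier_mat n n" "\<sigma>1 \<in> carrier_mat n n" "\<sigma>2 \<in> carrier_mat n n"
    using assms unfolding density_def by auto
  have pure: "S_ab \<alpha> \<beta> \<tau> = 0" if "pure_state m \<tau>"
    unfolding S_ab_def tr_pow_pure_state[OF that t] by simp
  show ?thesis
    using J_ab_nonneg[OF r s] J_ab_upper_bound[OF r s] J_ab_kron[OF r s t] pure
      J_ab_unitary_conj[OF r s] J_ab_comm[OF carriers(1,2)]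
      J_ab_lipschitz[OF assms(3,4) s] J_ab_lipschitz[OF assms(5,6) r]
      J_ab_comm[OF carriers(1,3)] J_ab_comm[OF carriers(1,4)]
    by auto
qed

end
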